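(* Let $k$ be a field and let $T$ be a forest. Let $v$ be a vertex of $T$ with neighbours $v_1,\dots,v_n$ ($n\geqslant 1$) such that $v_1,\dots,v_{n-1}$ all have degree $1$, and such that if $n=1$ then $v_1$ has degree $1$. Let $T'=T\setminus\{v_1\}$ and $T''=T\setminus\{v,v_1,\dots,v_n\}$. Then for all $i,d$, $$\beta_{i,d}(T)=\beta_{i,d}(T')+\sum_{j=0}^{n-1}\binom{n-1}{j}\beta_{i-(j+1),\,d-(j+2)}(T'').$$
   Context: A forest is a finite simple graph with no cycles. For a graph $G$ and a set $S$ of its vertices, $G\setminus S$ is the induced subgraph on the remaining vertices. For $G$ with vertices $x_1,\dots,x_N$, $R=k[x_1,\dots,x_N]$ with the standard $\mathbb{N}$-grading, $I(G)$ is generated by $x_ax_b$ for all edges $\{x_a,x_b\}$, and $\beta_{i,d}(G)=\dim_k(\operatorname{Tor}_i^R(R/I(G),k))_d$. Betti numbers with a negative index are $0$; if $T''$ has no vertices, its ring is $k$, so $\beta_{0,0}(T'')=1$ and all its other Betti numbers are $0$. *)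

theory Defs
  imports Complex_Main "HOL-Library.Function_Algebras"
begin

definition simple_graph :: "'v set \<Rightarrow> 'v set set \<Rightarrow> bool" where
  "simple_graph V E \<longleftrightarrow> finite V \<and> (\<forall>e\<in>E. \<exists>a b. e = {a, b} \<and> a \<noteq> b \<and> a \<in> V \<and> b \<in> V)"

definition is_cycle :: "'v set set \<Rightarrow> 'v list \<Rightarrow> bool" where
  "is_cycle E cs \<longleftrightarrow> length cs \<ge> 3 \<and> distinct cs \<and>
     (\<forall>i < length cs. {cs ! i, cs ! ((i + 1) mod length cs)} \<in> E)"

definition forest :: "'v set \<Rightarrow> 'v set set \<Rightarrow> bool" where
  "forest V E \<longleftrightarrow> simple_graph V E \<and> \<not> (\<exists>cs. set cs \<subseteq> V \<and> is_cycle E cs)"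

definition neighbours :: "'v set set \<Rightarrow> 'v \<Rightarrow> 'v set" where
  "neighbours E v = {u. {v, u} \<in> E}"

definition degree :: "'v set set \<Rightarrow> 'v \<Rightarrow> nat" where
  "degree E v = card (neighbours E v)"

text \<open>Edges of the induced subgraph on the vertex set W; G \ S is (V - S, induced E (V - S)).\<close>
definition induced :: "'v set set \<Rightarrow> 'v set \<Rightarrow> 'v set set" where
  "induced E W = {e \<in> E. e \<subseteq> W}"

text \<open>Monomials in the variables V of degree e are exponent vectors supported in V.
A monomial is standard (nonzero in R/I(G)) iff it is divisible by no x_a x_b for an
edge {a,b}. The degree-d part of (K(x;R) tensor R/I(G))_i has the k-basis m e_S with
S a subset of V, card S = i, m a standard monomial of degree d - i.\<close>

definition monoms :: "'v set \<Rightarrow> nat \<Rightarrow> ('v \<Rightarrow> nat) set" where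
  "monoms V e = {m. (\<forall>u. u \<notin> V \<longrightarrow> m u = 0) \<and> sum m V = e}"

definition std_mono :: "'v set set \<Rightarrow> ('v \<Rightarrow> nat) \<Rightarrow> bool" where
  "std_mono E m \<longleftrightarrow> (\<forall>e\<in>E. \<exists>u\<in>e. m u = 0)"

definition kbasis :: "'v set \<Rightarrow> 'v set set \<Rightarrow> nat \<Rightarrow> nat \<Rightarrow> ('v set \<times> ('v \<Rightarrow> nat)) set" where
  "kbasis V E i d = {(S, m). S \<subseteq> V \<and> card S = i \<and> i \<le> d \<and> m \<in> monoms V (d - i) \<and> std_mono E m}"

text \<open>Coefficient of the basis element y in the Koszul differential of x:
d(m e_S) = sum over s in S of (-1)^(number of t in S below s) (x_s m) e_(S - {s}).\<close>
definition kcoef :: "('v::linorder set \<times> ('v \<Rightarrow> nat)) \<Rightarrow> ('v set \<times> ('v \<Rightarrow> nat)) \<Rightarrow> 'k::field" where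
  "kcoef x y = (case x of (S, m) \<Rightarrow> case y of (T, m') \<Rightarrow>
     if T \<subseteq> S \<and> card (S - T) = 1 \<and> m' = m(the_elem (S - T) := Suc (m (the_elem (S - T))))
     then (- 1) ^ card {t \<in> S. t < the_elem (S - T)} else 0)"

definition kchains :: "'v set \<Rightarrow> 'v set set \<Rightarrow> nat \<Rightarrow> nat \<Rightarrow> (('v set \<times> ('v \<Rightarrow> nat)) \<Rightarrow> 'k::field) set" where
  "kchains V E i d = {c. \<forall>x. x \<notin> kbasis V E i d \<longrightarrow> c x = 0}"

definition kdiff :: "'v::linorder set \<Rightarrow> 'v set set \<Rightarrow> nat \<Rightarrow> nat \<Rightarrow>
    (('v set \<times> ('v \<Rightarrow> nat)) \<Rightarrow> 'k::field) \<Rightarrow> (('v set \<times> ('v \<Rightarrow> nat)) \<Rightarrow> 'k)" where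
  "kdiff V E i d c = (\<lambda>y. if y \<in> kbasis V E (i - 1) d
      then (\<Sum>x\<in>kbasis V E i d. c x * kcoef x y) else 0)"

definition kscale :: "'k::field \<Rightarrow> ('a \<Rightarrow> 'k) \<Rightarrow> ('a \<Rightarrow> 'k)" where
  "kscale a f = (\<lambda>x. a * f x)"

definition kcycles :: "'v::linorder set \<Rightarrow> 'v set set \<Rightarrow> nat \<Rightarrow> nat \<Rightarrow> (('v set \<times> ('v \<Rightarrow> nat)) \<Rightarrow> 'k::field) set" where
  "kcycles V E i d = (if i = 0 then kchains V E 0 d else {c \<in> kchains V E i d. kdiff V E i d c = 0})"

definition kboundaries :: "'v::linorder set \<Rightarrow> 'v set set \<Rightarrow> nat \<Rightarrow> nat \<Rightarrow> (('v set \<times> ('v \<Rightarrow> nat)) \<Rightarrow> 'k::field) set" where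
  "kboundaries V E i d = kdiff V E (Suc i) d ` kchains V E (Suc i) d"

text \<open>dim_k Tor_i^R(R/I(G), k)_d = dim_k H_i(K(x;R) tensor R/I(G))_d, for i, d \<ge> 0.\<close>
definition betti_nat :: "'k::field itself \<Rightarrow> 'v::linorder set \<Rightarrow> 'v set set \<Rightarrow> nat \<Rightarrow> nat \<Rightarrow> nat" where
  "betti_nat _ V E i d =
     vector_space.dim (kscale :: 'k \<Rightarrow> _) (kcycles V E i d :: (_ \<Rightarrow> 'k) set)
     - vector_space.dim (kscale :: 'k \<Rightarrow> _) (kboundaries V E i d :: (_ \<Rightarrow> 'k) set)"

definition betti :: "'k::field itself \<Rightarrow> 'v::linorder set \<Rightarrow> 'v set set \<Rightarrow> int \<Rightarrow> int \<Rightarrow> nat" where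
  "betti K V E i d = (if i < 0 \<or> d < 0 then 0 else betti_nat K V E (nat i) (nat d))"

end

theory Submission
  imports Defs
begin

text \<open>
  \<open>Tor\<close> is computed by the Koszul complex of \<open>R/I(T)\<close>, which in internal degree \<open>d\<close> has
  the basis \<open>m e\<^sub>S\<close> with \<open>m\<close> a standard monomial of degree \<open>d - |S|\<close>.  The basis elements in
  which the leaf \<open>v\<^sub>1\<close> does not occur span a direct summand, the Koszul complex of \<open>T'\<close>.  On
  the complementary summand, the differential component "move \<open>v\<^sub>1\<close> from \<open>S\<close> into \<open>m\<close>" is a
  perfect matching with coefficients \<open>\<plusminus>1\<close>, and so is "move \<open>v\<close> into \<open>m\<close>" on what remains;
  cancelling both leaves the elements with \<open>v\<^sub>1 \<in> S\<close>, \<open>v \<notin> S\<close> and \<open>x\<^sub>v\<close>-exponent \<open>1\<close>.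
  Such \<open>m\<close> vanishes on all neighbours of \<open>v\<close>, so these elements split into subcomplexes by
  \<open>J = S \<inter> {v\<^sub>2, \<dots>, v\<^sub>n}\<close>, and deleting \<open>v\<^sub>1\<close>, \<open>J\<close> and \<open>x\<^sub>v\<close> identifies each one, up to signs,
  with the Koszul complex of \<open>T''\<close> shifted by \<open>(|J| + 1, |J| + 2)\<close>.  Counting the \<open>J\<close> of each
  size gives the binomial coefficients.
\<close>

section \<open>Dimensions of sums and injective images\<close>

interpretation kv: vector_space "kscale :: 'k::field \<Rightarrow> ('b \<Rightarrow> 'k) \<Rightarrow> 'b \<Rightarrow> 'k"
  by unfold_locales (auto simp: kscale_def fun_eq_iff algebra_simps)

context vector_space
begin

lemma obtain_finite_basis:
  assumes "U \<subseteq> span F" "finite F"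
  obtains B where "B \<subseteq> U" "independent B" "U \<subseteq> span B" "card B = dim U" "finite B"
proof -
  obtain B where B: "B \<subseteq> U" "independent B" "U \<subseteq> span B" "card B = dim U"
    using basis_exists by blast
  moreover have "finite B"
    using independent_span_bound[OF assms(2) B(2)] B(1) assms(1) by blast
  ultimately show ?thesis using that by blast
qed

lemma dim_subset_finite_span:
  assumes "U \<subseteq> W" "W \<subseteq> span F" "finite F"
  shows "dim U \<le> dim W"
proof -
  obtain BU where BU: "BU \<subseteq> U" "independent BU" "U \<subseteq> span BU" "card BU = dim U"
    using basis_exists by blast
  obtain BW where BW: "BW \<subseteq> W" "independent BW" "W \<subseteq> span BW" "card BW = dim W" "finite BW"
    using obtain_finite_basis assms(2,3) by blast
  have "BU \<subseteq> span BW" using BU(1) assms(1) BW(3) by blast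
  from independent_span_bound[OF BW(5) BU(2) this] show ?thesis using BU(4) BW(4) by simp
qed

lemma independent_Un_Int_zero:
  assumes U: "subspace U" and W: "subspace W" and UW: "U \<inter> W = {0}"
    and B: "B \<subseteq> U" "independent B" "finite B"
    and C: "C \<subseteq> W" "independent C" "finite C"
  shows "independent (B \<union> C)"
proof
  assume "dependent (B \<union> C)"
  then obtain u where nz: "\<exists>x\<in>B \<union> C. u x \<noteq> 0" and sum0: "(\<Sum>x\<in>B \<union> C. u x *s x) = 0"
    using dependent_finite B(3) C(3) by auto
  define a where "a = (\<Sum>x\<in>B. u x *s x)"
  define b where "b = (\<Sum>x\<in>C. u x *s x)"
  have "0 \<notin> B" using B(2) dependent_zero by blast
  moreover have "B \<inter> C \<subseteq> U \<inter> W" using B(1) C(1) by blast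
  ultimately have "B \<inter> C = {}" using UW by auto
  then have "a + b = 0"
    using sum0 B(3) C(3) by (simp add: a_def b_def sum.union_disjoint)
  then have ab: "a = - b" by (simp add: eq_neg_iff_add_eq_0)
  have "a \<in> U" "b \<in> W"
    unfolding a_def b_def using B(1) C(1) by (auto intro!: subspace_sum subspace_scale U W)
  then have "a \<in> U \<inter> W" using ab subspace_neg[OF W] by simp
  then have "a = 0" "b = 0" using UW ab by auto
  then have "\<forall>x\<in>B. u x = 0" "\<forall>x\<in>C. u x = 0"
    using independentD[OF B(2,3) order_refl] independentD[OF C(2,3) order_refl]
    unfolding a_def b_def by blast+
  with nz show False by blast
qed

lemma dim_sums_Int_zero:
  assumes U: "subspace U" and W: "subspace W" and UW: "U \<inter> W = {0}"
    and F: "U \<subseteq> span F" "W \<subseteq> span F" "finite F"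
  shows "dim {u + w | u w. u \<in> U \<and> w \<in> W} = dim U + dim W"
proof -
  obtain B where B: "B \<subseteq> U" "independent B" "U \<subseteq> span B" "card B = dim U" "finite B"
    using obtain_finite_basis F(1,3) by blast
  obtain C where C: "C \<subseteq> W" "independent C" "W \<subseteq> span C" "card C = dim W" "finite C"
    using obtain_finite_basis F(2,3) by blast
  have "0 \<notin> B" using B(2) dependent_zero by blast
  moreover have "B \<inter> C \<subseteq> U \<inter> W" using B(1) C(1) by blast
  ultimately have disj: "B \<inter> C = {}" using UW by auto
  have "card (B \<union> C) = dim {u + w | u w. u \<in> U \<and> w \<in> W}"
  proof (rule basis_card_eq_dim)
    show "B \<union> C \<subseteq> {u + w | u w. u \<in> U \<and> w \<in> W}"
    proof
      fix x assume "x \<in> B \<union> C"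
      then consider "x \<in> U" | "x \<in> W" using B(1) C(1) by blast
      then show "x \<in> {u + w | u w. u \<in> U \<and> w \<in> W}"
      proof cases
        case 1
        then show ?thesis using subspace_0[OF W] by (intro CollectI exI[of _ x] exI[of _ 0]) simp
      next
        case 2
        then show ?thesis using subspace_0[OF U] by (intro CollectI exI[of _ 0] exI[of _ x]) simp
      qed
    qed
    show "{u + w | u w. u \<in> U \<and> w \<in> W} \<subseteq> span (B \<union> C)"
      using B(3) C(3) by (auto simp: span_Un)
    show "independent (B \<union> C)"
      by (rule independent_Un_Int_zero[OF U W UW B(1,2,5) C(1,2,5)])
  qed
  then show ?thesis
    using card_Un_disjoint[OF B(5) C(5) disj] B(4) C(4) by simp
qed

lemma dim_image_inj_on:
  assumes f: "module_hom scale scale f" and U: "subspace U" and inj: "inj_on f U"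
    and F: "U \<subseteq> span F" "finite F"
  shows "dim (f ` U) = dim U"
proof -
  interpret f: module_hom scale scale f by (rule f)
  obtain B where B: "B \<subseteq> U" "independent B" "U \<subseteq> span B" "card B = dim U" "finite B"
    using obtain_finite_basis F by blast
  have "span B \<subseteq> U" using span_minimal[OF B(1) U] .
  then have "inj_on f (span B)" using inj_on_subset[OF inj] by blast
  then have "independent (f ` B)" by (rule f.independent_injective_image[OF B(2)])
  moreover have "f ` U \<subseteq> span (f ` B)" using f.span_image B(3) by blast
  moreover have "f ` B \<subseteq> f ` U" using B(1) by blast
  ultimately have "card (f ` B) = dim (f ` U)" using basis_card_eq_dim by blast
  moreover have "card (f ` B) = card B" using card_image inj_on_subset[OF inj B(1)] by blast
  ultimately show ?thesis using B(4) by simp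
qed

end

section \<open>Chain complexes with a basis\<close>

text \<open>A complex is given by a basis \<open>K i\<close> of each chain space and the matrix entries \<open>c x y\<close>
  of the differential from \<open>x \<in> K (Suc i)\<close> to \<open>y \<in> K i\<close>; chains are the functions supported
  in the basis.\<close>

definition chains :: "(nat \<Rightarrow> 'b set) \<Rightarrow> nat \<Rightarrow> ('b \<Rightarrow> 'k::field) set" where
  "chains K i = {f. \<forall>x. x \<notin> K i \<longrightarrow> f x = 0}"

definition boundary :: "(nat \<Rightarrow> 'b set) \<Rightarrow> ('b \<Rightarrow> 'b \<Rightarrow> 'k::field) \<Rightarrow> nat \<Rightarrow> ('b \<Rightarrow> 'k) \<Rightarrow> 'b \<Rightarrow> 'k"
  where "boundary K c i f = (\<lambda>y. if y \<in> K (i - 1) then (\<Sum>x\<in>K i. f x * c x y) else 0)"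

definition cycles :: "(nat \<Rightarrow> 'b set) \<Rightarrow> ('b \<Rightarrow> 'b \<Rightarrow> 'k::field) \<Rightarrow> nat \<Rightarrow> ('b \<Rightarrow> 'k) set" where
  "cycles K c i = (if i = 0 then chains K 0 else {f \<in> chains K i. boundary K c i f = 0})"

definition boundaries :: "(nat \<Rightarrow> 'b set) \<Rightarrow> ('b \<Rightarrow> 'b \<Rightarrow> 'k::field) \<Rightarrow> nat \<Rightarrow> ('b \<Rightarrow> 'k) set"
  where "boundaries K c i = boundary K c (Suc i) ` chains K (Suc i)"

definition homology_dim :: "(nat \<Rightarrow> 'b set) \<Rightarrow> ('b \<Rightarrow> 'b \<Rightarrow> 'k::field) \<Rightarrow> nat \<Rightarrow> nat" where
  "homology_dim K c i = kv.dim (cycles K c i) - kv.dim (boundaries K c i)"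

definition is_complex :: "(nat \<Rightarrow> 'b set) \<Rightarrow> ('b \<Rightarrow> 'b \<Rightarrow> 'k::field) \<Rightarrow> bool" where
  "is_complex K c \<longleftrightarrow>
     (\<forall>i. \<forall>f \<in> chains K (Suc (Suc i)). boundary K c (Suc i) (boundary K c (Suc (Suc i)) f) = 0)"

definition subcomplex :: "(nat \<Rightarrow> 'b set) \<Rightarrow> (nat \<Rightarrow> 'b set) \<Rightarrow> ('b \<Rightarrow> 'b \<Rightarrow> 'k::field) \<Rightarrow> bool"
  where "subcomplex P K c \<longleftrightarrow>
     (\<forall>i. P i \<subseteq> K i) \<and> (\<forall>i x y. x \<in> P (Suc i) \<longrightarrow> y \<in> K i \<longrightarrow> c x y \<noteq> 0 \<longrightarrow> y \<in> P i)"

definition restrict_chain :: "'b set \<Rightarrow> ('b \<Rightarrow> 'k::zero) \<Rightarrow> 'b \<Rightarrow> 'k" where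
  "restrict_chain A f = (\<lambda>x. if x \<in> A then f x else 0)"

lemma chains_closed [simp]:
  "0 \<in> chains K i"
  "f \<in> chains K i \<Longrightarrow> g \<in> chains K i \<Longrightarrow> f + g \<in> chains K i"
  "f \<in> chains K i \<Longrightarrow> - f \<in> chains K i"
  "f \<in> chains K i \<Longrightarrow> g \<in> chains K i \<Longrightarrow> f - g \<in> chains K i"
  "f \<in> chains K i \<Longrightarrow> kscale a f \<in> chains K i"
  by (simp_all add: chains_def kscale_def)

lemma chains_subspace: "kv.subspace (chains K i)"
  by (simp add: kv.subspace_def)

lemma chains_mono: "f \<in> chains A i \<Longrightarrow> A i \<subseteq> B i \<Longrightarrow> f \<in> chains B i"
  by (auto simp: chains_def)

lemma chains_empty: "K i = {} \<Longrightarrow> chains K i = {0}"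
  by (auto simp: chains_def fun_eq_iff)

lemma chains_Int_zero:
  assumes "f \<in> chains A i" "f \<in> chains B i" "A i \<inter> B i = {}"
  shows "f = 0"
  using assms by (auto simp: chains_def fun_eq_iff)

lemma restrict_chain_in_chains: "restrict_chain (A i) f \<in> chains A i"
  by (simp add: restrict_chain_def chains_def)

lemma sum_fun_apply: "(\<Sum>x\<in>A. f x) y = (\<Sum>x\<in>A. f x y)"
  by (induction A rule: infinite_finite_induct) auto

lemma finite_span_chains:
  assumes "finite (K i)"
  obtains F :: "('b \<Rightarrow> 'k::field) set" where "finite F" "chains K i \<subseteq> kv.span F"
proof
  define e :: "'b \<Rightarrow> 'b \<Rightarrow> 'k" where "e x = (\<lambda>y. if y = x then 1 else 0)" for x
  show "finite (e ` K i)" using assms by simp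
  show "chains K i \<subseteq> kv.span (e ` K i)"
  proof
    fix f :: "'b \<Rightarrow> 'k" assume f: "f \<in> chains K i"
    have "f = (\<Sum>x\<in>K i. kscale (f x) (e x))"
    proof
      fix y
      have "(\<Sum>x\<in>K i. kscale (f x) (e x)) y = (\<Sum>x\<in>K i. if y = x then f x else 0)"
        by (simp add: sum_fun_apply kscale_def e_def if_distrib cong: if_cong)
      then show "f y = (\<Sum>x\<in>K i. kscale (f x) (e x)) y"
        using f assms by (simp add: chains_def)
    qed
    also have "\<dots> \<in> kv.span (e ` K i)"
      by (intro kv.span_sum kv.span_scale kv.span_base) auto
    finally show "f \<in> kv.span (e ` K i)" .
  qed
qed

lemma boundary_in_chains: "boundary K c (Suc i) f \<in> chains K i"
  by (simp add: boundary_def chains_def)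

lemma boundary_add: "boundary K c i (f + g) = boundary K c i f + boundary K c i g"
  by (auto simp: boundary_def fun_eq_iff algebra_simps sum.distrib)

lemma boundary_minus: "boundary K c i (- f) = - boundary K c i f"
  by (auto simp: boundary_def fun_eq_iff sum_negf)

lemma boundary_zero [simp]: "boundary K c i 0 = 0"
  by (simp add: boundary_def fun_eq_iff)

lemma boundary_scale: "boundary K c i (kscale a f) = kscale a (boundary K c i f)"
  by (auto simp: boundary_def fun_eq_iff kscale_def sum_distrib_left algebra_simps)

lemma boundary_module_hom: "module_hom kscale kscale (boundary K c i)"
  unfolding module_hom_iff using kv.module_axioms boundary_add boundary_scale by blast

lemma boundary_subcomplex:
  assumes P: "subcomplex P K c" and fin: "finite (K (Suc i))" and f: "f \<in> chains P (Suc i)"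
  shows "boundary K c (Suc i) f = boundary P c (Suc i) f"
proof
  fix y
  have PK: "P (Suc i) \<subseteq> K (Suc i)" "P i \<subseteq> K i" using P by (auto simp: subcomplex_def)
  have sum_eq: "(\<Sum>x\<in>K (Suc i). f x * c x y) = (\<Sum>x\<in>P (Suc i). f x * c x y)"
    using f PK fin by (intro sum.mono_neutral_right) (auto simp: chains_def)
  have "(\<Sum>x\<in>P (Suc i). f x * c x y) = 0" if "y \<in> K i" "y \<notin> P i"
    using P that by (intro sum.neutral) (auto simp: subcomplex_def)
  then show "boundary K c (Suc i) f y = boundary P c (Suc i) f y"
    using PK sum_eq by (auto simp: boundary_def)
qed

lemma boundary_subcomplex_in_chains:
  assumes "subcomplex P K c" "finite (K (Suc i))" "f \<in> chains P (Suc i)"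
  shows "boundary K c (Suc i) f \<in> chains P i"
  using boundary_subcomplex[OF assms] boundary_in_chains by metis

lemma subcomplex_chains: "subcomplex P K c \<Longrightarrow> f \<in> chains P i \<Longrightarrow> f \<in> chains K i"
  by (auto simp: subcomplex_def chains_def)

lemma subcomplex_is_complex:
  fixes P K :: "nat \<Rightarrow> 'b set" and c :: "'b \<Rightarrow> 'b \<Rightarrow> 'k::field"
  assumes P: "subcomplex P K c" and fin: "\<And>i. finite (K i)" and K: "is_complex K c"
  shows "is_complex P c"
  unfolding is_complex_def
proof (intro allI ballI)
  fix i and f :: "'b \<Rightarrow> 'k" assume f: "f \<in> chains P (Suc (Suc i))"
  let ?g = "boundary K c (Suc (Suc i)) f"
  have g: "boundary P c (Suc (Suc i)) f = ?g" "?g \<in> chains P (Suc i)"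
    using boundary_subcomplex[OF P fin f] boundary_subcomplex_in_chains[OF P fin f] by simp_all
  have "boundary K c (Suc i) ?g = 0"
    using K subcomplex_chains[OF P f] by (simp add: is_complex_def)
  then show "boundary P c (Suc i) (boundary P c (Suc (Suc i)) f) = 0"
    using boundary_subcomplex[OF P fin g(2)] g(1) by simp
qed

lemma subcomplex_mono:
  assumes "subcomplex P K c" "\<And>i. P i \<subseteq> L i" "\<And>i. L i \<subseteq> K i"
  shows "subcomplex P L c"
  using assms unfolding subcomplex_def by (meson subsetD)

lemma subcomplex_UN:
  assumes "\<And>J. J \<in> F \<Longrightarrow> subcomplex (Q J) K c"
  shows "subcomplex (\<lambda>i. \<Union>J\<in>F. Q J i) K c"
  using assms unfolding subcomplex_def by (simp add: UN_subset_iff) meson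

lemma cycles_Suc: "cycles K c (Suc i) = {f \<in> chains K (Suc i). boundary K c (Suc i) f = 0}"
  by (simp add: cycles_def)

lemma cycles_subset_chains: "cycles K c i \<subseteq> chains K i"
  by (auto simp: cycles_def)

lemma boundaries_subset_chains: "boundaries K c i \<subseteq> chains K i"
  using boundary_in_chains by (auto simp: boundaries_def)

lemma cycles_subspace: "kv.subspace (cycles K c i)"
  by (auto simp: cycles_def kv.subspace_def boundary_add boundary_scale)

lemma boundaries_subspace: "kv.subspace (boundaries K c i)"
  unfolding boundaries_def
  by (rule module_hom.subspace_image[OF boundary_module_hom chains_subspace])

lemma boundaries_subset_cycles:
  assumes "is_complex K c" shows "boundaries K c i \<subseteq> cycles K c i"
proof (cases i)
  case 0
  then show ?thesis using boundaries_subset_chains by (simp add: cycles_def)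
next
  case (Suc j)
  then show ?thesis
    using assms boundary_in_chains by (auto simp: boundaries_def cycles_def is_complex_def)
qed

lemma dim_boundaries_le_dim_cycles:
  fixes K :: "nat \<Rightarrow> 'b set" and c :: "'b \<Rightarrow> 'b \<Rightarrow> 'k::field"
  assumes "is_complex K c" "finite (K i)"
  shows "kv.dim (boundaries K c i) \<le> kv.dim (cycles K c i)"
proof -
  obtain F :: "('b \<Rightarrow> 'k) set" where F: "finite F" "chains K i \<subseteq> kv.span F"
    using finite_span_chains assms(2) by blast
  have "cycles K c i \<subseteq> kv.span F" using cycles_subset_chains F(2) by blast
  then show ?thesis
    using kv.dim_subset_finite_span[OF boundaries_subset_cycles[OF assms(1)] _ F(1)] by blast
qed

lemma homology_dim_empty:
  fixes K :: "nat \<Rightarrow> 'b set" and c :: "'b \<Rightarrow> 'b \<Rightarrow> 'k::field"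
  assumes "K i = {}"
  shows "homology_dim K c i = 0"
proof -
  have "cycles K c i \<subseteq> {0}" using cycles_subset_chains[of K c i] chains_empty assms by blast
  then have "cycles K c i \<subseteq> kv.span {}" by (simp add: kv.span_empty)
  then have "kv.dim (cycles K c i) = 0" using kv.dim_le_card[of _ "{}"] by simp
  then show ?thesis by (simp add: homology_dim_def)
qed

context
  fixes K A B :: "nat \<Rightarrow> 'b set" and c :: "'b \<Rightarrow> 'b \<Rightarrow> 'k::field"
  assumes finite_K: "\<And>i. finite (K i)"
    and K_Un: "\<And>i. K i = A i \<union> B i" and disjoint: "\<And>i. A i \<inter> B i = {}"
    and sub_A: "subcomplex A K c" and sub_B: "subcomplex B K c"
begin

lemma chains_Un:
  "(chains K i :: ('b \<Rightarrow> 'k) set) = {a + b | a b. a \<in> chains A i \<and> b \<in> chains B i}"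
proof (intro equalityI subsetI)
  fix f :: "'b \<Rightarrow> 'k" assume "f \<in> chains K i"
  then have "f = restrict_chain (A i) f + restrict_chain (B i) f"
    using K_Un[of i] disjoint[of i] by (auto simp: restrict_chain_def chains_def fun_eq_iff)
  then show "f \<in> {a + b | a b. a \<in> chains A i \<and> b \<in> chains B i}"
    using restrict_chain_in_chains[of A i f] restrict_chain_in_chains[of B i f] by blast
next
  fix f :: "'b \<Rightarrow> 'k" assume "f \<in> {a + b | a b. a \<in> chains A i \<and> b \<in> chains B i}"
  then obtain a b where "a \<in> chains A i" "b \<in> chains B i" "f = a + b" by blast
  then show "f \<in> chains K i"
    using subcomplex_chains[OF sub_A, of a i] subcomplex_chains[OF sub_B, of b i] by simp
qed

lemma chains_Int: "chains A i \<inter> chains B i = {0 :: 'b \<Rightarrow> 'k}"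
  using chains_Int_zero[of _ A i B] disjoint[of i] by auto

lemma add_chains_eq_0_iff:
  assumes "a \<in> chains A i" "b \<in> chains B i"
  shows "a + b = 0 \<longleftrightarrow> a = 0 \<and> b = (0 :: 'b \<Rightarrow> 'k)"
proof
  assume "a + b = 0"
  then have "a = - b" by (simp add: eq_neg_iff_add_eq_0)
  then have "a \<in> chains A i \<inter> chains B i" using assms by simp
  then show "a = 0 \<and> b = 0" using chains_Int \<open>a = - b\<close> by simp
qed simp

lemma boundary_Un:
  assumes "a \<in> chains A (Suc i)" "b \<in> chains B (Suc i)"
  shows "boundary K c (Suc i) (a + b) = boundary A c (Suc i) a + boundary B c (Suc i) b"
  using boundary_subcomplex[OF sub_A finite_K assms(1)] boundary_subcomplex[OF sub_B finite_K assms(2)]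
  by (simp add: boundary_add)

lemma cycles_Un: "cycles K c i = {a + b | a b. a \<in> cycles A c i \<and> b \<in> cycles B c i}"
proof (cases i)
  case 0
  then show ?thesis by (simp add: cycles_def chains_Un)
next
  case (Suc j)
  have split: "a + b \<in> cycles K c i \<longleftrightarrow> a \<in> cycles A c i \<and> b \<in> cycles B c i"
    if "a \<in> chains A i" "b \<in> chains B i" for a b
    using that boundary_Un[of a j b] add_chains_eq_0_iff[OF boundary_in_chains boundary_in_chains]
    by (auto simp: Suc cycles_Suc chains_Un)
  show ?thesis
  proof (intro set_eqI iffI)
    fix f assume f: "f \<in> cycles K c i"
    then obtain a b where "a \<in> chains A i" "b \<in> chains B i" "f = a + b"
      using cycles_subset_chains[of K c i] chains_Un by blast
    then show "f \<in> {a + b | a b. a \<in> cycles A c i \<and> b \<in> cycles B c i}"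
      using split f by blast
  next
    fix f assume "f \<in> {a + b | a b. a \<in> cycles A c i \<and> b \<in> cycles B c i}"
    then obtain a b where "a \<in> cycles A c i" "b \<in> cycles B c i" "f = a + b" by blast
    then show "f \<in> cycles K c i"
      using split cycles_subset_chains[of A c i] cycles_subset_chains[of B c i] by blast
  qed
qed

lemma boundaries_Un: "boundaries K c i = {a + b | a b. a \<in> boundaries A c i \<and> b \<in> boundaries B c i}"
proof (intro set_eqI iffI)
  fix g assume "g \<in> boundaries K c i"
  then obtain a b where "a \<in> chains A (Suc i)" "b \<in> chains B (Suc i)"
    "g = boundary K c (Suc i) (a + b)"
    unfolding boundaries_def chains_Un by blast
  then show "g \<in> {a + b | a b. a \<in> boundaries A c i \<and> b \<in> boundaries B c i}"
    unfolding boundaries_def by (auto simp: boundary_Un)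
next
  fix g assume "g \<in> {a + b | a b. a \<in> boundaries A c i \<and> b \<in> boundaries B c i}"
  then obtain a b where "a \<in> chains A (Suc i)" "b \<in> chains B (Suc i)"
    "g = boundary A c (Suc i) a + boundary B c (Suc i) b"
    unfolding boundaries_def by blast
  then show "g \<in> boundaries K c i"
    unfolding boundaries_def chains_Un by (auto simp flip: boundary_Un)
qed

lemma homology_dim_Un:
  assumes complex: "is_complex K c"
  shows "homology_dim K c i = homology_dim A c i + homology_dim B c i"
proof -
  obtain F :: "('b \<Rightarrow> 'k) set" where F: "finite F" "chains K i \<subseteq> kv.span F"
    using finite_span_chains finite_K by blast
  have span_A: "S \<subseteq> kv.span F" if "S \<subseteq> chains A i" for S
    using that F(2) subcomplex_chains[OF sub_A, of _ i] by blast
  have span_B: "S \<subseteq> kv.span F" if "S \<subseteq> chains B i" for S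
    using that F(2) subcomplex_chains[OF sub_B, of _ i] by blast
  have Int_0: "S \<inter> T = {0}"
    if "S \<subseteq> chains A i" "T \<subseteq> chains B i" "kv.subspace S" "kv.subspace T"
    for S T :: "('b \<Rightarrow> 'k) set"
  proof -
    have "S \<inter> T \<subseteq> {0}" using that(1,2) chains_Int[of i] by blast
    then show ?thesis using kv.subspace_0[OF that(3)] kv.subspace_0[OF that(4)] by blast
  qed
  have finite_AB: "finite (A i)" "finite (B i)" using finite_K[of i] K_Un[of i] by auto
  have complex_A: "is_complex A c" by (rule subcomplex_is_complex[OF sub_A finite_K complex])
  have complex_B: "is_complex B c" by (rule subcomplex_is_complex[OF sub_B finite_K complex])
  have "kv.dim (cycles K c i) = kv.dim (cycles A c i) + kv.dim (cycles B c i)"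
    unfolding cycles_Un
    by (rule kv.dim_sums_Int_zero[OF cycles_subspace cycles_subspace
          Int_0[OF cycles_subset_chains cycles_subset_chains cycles_subspace cycles_subspace]
          span_A[OF cycles_subset_chains] span_B[OF cycles_subset_chains] F(1)])
  moreover have "kv.dim (boundaries K c i) = kv.dim (boundaries A c i) + kv.dim (boundaries B c i)"
    unfolding boundaries_Un
    by (rule kv.dim_sums_Int_zero[OF boundaries_subspace boundaries_subspace
          Int_0[OF boundaries_subset_chains boundaries_subset_chains boundaries_subspace boundaries_subspace]
          span_A[OF boundaries_subset_chains] span_B[OF boundaries_subset_chains] F(1)])
  ultimately show ?thesis
    using dim_boundaries_le_dim_cycles[OF complex_A finite_AB(1)]
      dim_boundaries_le_dim_cycles[OF complex_B finite_AB(2)]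
    by (simp add: homology_dim_def)
qed

end

lemma homology_dim_UN:
  fixes K :: "nat \<Rightarrow> 'b set" and Q :: "'j \<Rightarrow> nat \<Rightarrow> 'b set" and c :: "'b \<Rightarrow> 'b \<Rightarrow> 'k::field"
  assumes finite_K: "\<And>i. finite (K i)" and complex: "is_complex K c" and "finite I"
    and K_UN: "\<And>i. K i = (\<Union>J\<in>I. Q J i)"
    and disjoint: "\<And>i J J'. J \<in> I \<Longrightarrow> J' \<in> I \<Longrightarrow> J \<noteq> J' \<Longrightarrow> Q J i \<inter> Q J' i = {}"
    and sub: "\<And>J. J \<in> I \<Longrightarrow> subcomplex (Q J) K c"
  shows "homology_dim K c i = (\<Sum>J\<in>I. homology_dim (Q J) c i)"
proof -
  have "homology_dim (\<lambda>i. \<Union>J\<in>F. Q J i) c i = (\<Sum>J\<in>F. homology_dim (Q J) c i)" if "F \<subseteq> I" for F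
    using finite_subset[OF that \<open>finite I\<close>] that
  proof (induction F rule: finite_induct)
    case empty
    then show ?case by (simp add: homology_dim_empty)
  next
    case (insert J0 F)
    let ?L = "\<lambda>i. \<Union>J\<in>insert J0 F. Q J i"
    have L_K: "?L i \<subseteq> K i" for i using K_UN insert.prems by blast
    have sub_L: "subcomplex ?L K c" by (rule subcomplex_UN) (use sub insert.prems in blast)
    have "subcomplex (\<lambda>i. \<Union>J\<in>F. Q J i) K c" by (rule subcomplex_UN) (use sub insert.prems in blast)
    then have sub_F: "subcomplex (\<lambda>i. \<Union>J\<in>F. Q J i) ?L c" by (rule subcomplex_mono) (use L_K in auto)
    have sub_J0: "subcomplex (Q J0) ?L c"
      by (rule subcomplex_mono[OF sub]) (use L_K insert.prems in auto)
    have "Q J0 i \<inter> (\<Union>J\<in>F. Q J i) = {}" for i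
      using disjoint insert.prems insert.hyps(2) by blast
    then have "homology_dim ?L c i = homology_dim (Q J0) c i + homology_dim (\<lambda>i. \<Union>J\<in>F. Q J i) c i"
      using homology_dim_Un[OF _ _ _ sub_J0 sub_F subcomplex_is_complex[OF sub_L finite_K complex]]
        finite_subset[OF L_K finite_K] by auto
    then show ?case using insert by simp
  qed
  moreover have "K = (\<lambda>i. \<Union>J\<in>I. Q J i)" using K_UN by auto
  ultimately show ?thesis by blast
qed

text \<open>Solving for the \<open>Tgt\<close>-coordinates with the invertible diagonal entries, every chain of
  \<open>K\<close> is a chain of \<open>Crit\<close>, plus a chain of \<open>Src\<close>, plus the boundary of a chain of \<open>Src\<close>;
  only the first summand contributes to homology.\<close>

context
  fixes K Src Tgt Crit :: "nat \<Rightarrow> 'b set" and c :: "'b \<Rightarrow> 'b \<Rightarrow> 'k::field" and g :: "'b \<Rightarrow> 'b"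
  assumes finite_K: "\<And>i. finite (K i)" and complex: "is_complex K c"
    and K_Un: "\<And>i. K i = Src i \<union> Tgt i \<union> Crit i"
    and disjoint: "\<And>i. Src i \<inter> Tgt i = {}" "\<And>i. Src i \<inter> Crit i = {}" "\<And>i. Tgt i \<inter> Crit i = {}"
    and Src_0: "Src 0 = {}"
    and sub_Crit: "subcomplex Crit K c"
    and g_bij: "\<And>i. bij_betw g (Src (Suc i)) (Tgt i)"
    and g_coef: "\<And>i x. x \<in> Src (Suc i) \<Longrightarrow> c x (g x) \<noteq> 0"
    and g_diagonal: "\<And>i x y. x \<in> Src (Suc i) \<Longrightarrow> y \<in> Tgt i \<Longrightarrow> y \<noteq> g x \<Longrightarrow> c x y = 0"
begin

lemma chains_Src_subset: "q \<in> chains Src i \<Longrightarrow> q \<in> chains K i"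
  by (rule chains_mono) (use K_Un in auto)

lemma boundary_boundary_Src:
  assumes "q \<in> chains Src (Suc (Suc i))"
  shows "boundary K c (Suc i) (boundary K c (Suc (Suc i)) q) = 0"
  using complex chains_Src_subset[OF assms] unfolding is_complex_def by blast

lemma boundary_at_partner:
  assumes q: "q \<in> chains Src (Suc i)" and x: "x \<in> Src (Suc i)"
  shows "boundary K c (Suc i) q (g x) = q x * c x (g x)"
proof -
  have "g x \<in> Tgt i" using g_bij x by (auto simp: bij_betw_def)
  then have "boundary K c (Suc i) q (g x) = (\<Sum>x'\<in>K (Suc i). q x' * c x' (g x))"
    using K_Un by (simp add: boundary_def)
  also have "\<dots> = (\<Sum>x'\<in>{x}. q x' * c x' (g x))"
  proof (rule sum.mono_neutral_right)
    show "finite (K (Suc i))" "{x} \<subseteq> K (Suc i)" using finite_K x K_Un by auto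
    show "\<forall>x'\<in>K (Suc i) - {x}. q x' * c x' (g x) = 0"
    proof
      fix x' assume x': "x' \<in> K (Suc i) - {x}"
      show "q x' * c x' (g x) = 0"
      proof (cases "x' \<in> Src (Suc i)")
        case True
        then have "g x' \<noteq> g x" using x x' g_bij[of i] by (auto simp: bij_betw_def inj_on_def)
        then show ?thesis using g_diagonal[OF True \<open>g x \<in> Tgt i\<close>] by simp
      next
        case False
        then show ?thesis using q by (simp add: chains_def)
      qed
    qed
  qed
  finally show ?thesis by simp
qed

lemma matched_chain_eq_0:
  assumes q: "q \<in> chains Src (Suc i)" and Dq: "boundary K c (Suc i) q \<in> chains Crit i"
  shows "q = 0"
proof
  fix x show "q x = 0 x"
  proof (cases "x \<in> Src (Suc i)")
    case True
    then have "g x \<in> Tgt i" using g_bij by (auto simp: bij_betw_def)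
    then have "boundary K c (Suc i) q (g x) = 0" using Dq disjoint(3) by (auto simp: chains_def)
    then show ?thesis using boundary_at_partner[OF q True] g_coef[OF True] by simp
  next
    case False
    then show ?thesis using q by (simp add: chains_def)
  qed
qed

lemma chains_decompose:
  assumes f: "f \<in> chains K i"
  obtains r p q where "r \<in> chains Crit i" "p \<in> chains Src i" "q \<in> chains Src (Suc i)"
    "f = r + p + boundary K c (Suc i) q"
proof -
  define q where "q x = (if x \<in> Src (Suc i) then f (g x) / c x (g x) else 0)" for x
  define h where "h = f - boundary K c (Suc i) q"
  have q: "q \<in> chains Src (Suc i)" by (simp add: q_def chains_def)
  have "h y = 0" if "y \<in> Tgt i" for y
  proof -
    obtain x where x: "x \<in> Src (Suc i)" "y = g x"
      using g_bij[of i] \<open>y \<in> Tgt i\<close> by (auto simp: bij_betw_def)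
    then show ?thesis using boundary_at_partner[OF q x(1)] g_coef[OF x(1)] by (simp add: h_def q_def)
  qed
  moreover have "h \<in> chains K i" using f boundary_in_chains[of K c i q] by (simp add: h_def)
  ultimately have "h = restrict_chain (Crit i) h + restrict_chain (Src i) h"
    using K_Un[of i] disjoint[of i] by (auto simp: restrict_chain_def chains_def fun_eq_iff)
  then have "f = restrict_chain (Crit i) h + restrict_chain (Src i) h + boundary K c (Suc i) q"
    by (simp add: h_def algebra_simps)
  then show ?thesis using that restrict_chain_in_chains q by blast
qed

lemma matched_cycle_decompose:
  assumes f: "f \<in> cycles K c i"
  obtains r q where "r \<in> cycles Crit c i" "q \<in> chains Src (Suc i)" "f = r + boundary K c (Suc i) q"
proof -
  obtain r p q where rpq: "r \<in> chains Crit i" "p \<in> chains Src i" "q \<in> chains Src (Suc i)"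
    "f = r + p + boundary K c (Suc i) q"
    using chains_decompose cycles_subset_chains f by blast
  have "p = 0 \<and> r \<in> cycles Crit c i"
  proof (cases i)
    case 0
    then show ?thesis using rpq(1,2) Src_0 by (simp add: cycles_def chains_empty)
  next
    case (Suc j)
    have "boundary K c i (boundary K c (Suc i) q) = 0"
      using boundary_boundary_Src rpq(3) Suc by simp
    then have "boundary K c i r + boundary K c i p = 0"
      using f rpq(4) Suc by (simp add: cycles_Suc boundary_add)
    then have "boundary K c i r = - boundary K c i p" by (simp add: eq_neg_iff_add_eq_0)
    then have Dp: "boundary K c i (- p) = boundary K c i r" by (simp add: boundary_minus)
    moreover have Dr: "boundary K c i r = boundary Crit c i r"
      using boundary_subcomplex[OF sub_Crit finite_K] rpq(1) Suc by simp
    moreover have "boundary Crit c i r \<in> chains Crit j"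
      using boundary_in_chains Suc by simp
    ultimately have "- p = 0" using matched_chain_eq_0[of "- p" j] rpq(2) Suc by simp
    then show ?thesis using Dp Dr rpq(1) Suc by (simp add: cycles_Suc)
  qed
  then show ?thesis using that[of r q] rpq by simp
qed

lemma matched_sum_in_cycles:
  assumes r: "r \<in> cycles Crit c i" and q: "q \<in> chains Src (Suc i)"
  shows "r + boundary K c (Suc i) q \<in> cycles K c i"
proof -
  have r': "r \<in> chains Crit i" using r cycles_subset_chains by blast
  have fK: "r + boundary K c (Suc i) q \<in> chains K i"
    using subcomplex_chains[OF sub_Crit r'] boundary_in_chains[of K c i q] by simp
  show ?thesis
  proof (cases i)
    case 0
    then show ?thesis using fK by (simp add: cycles_def)
  next
    case (Suc j)
    have "boundary K c i (boundary K c (Suc i) q) = 0"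
      using boundary_boundary_Src q Suc by simp
    moreover have "boundary K c i r = 0"
      using boundary_subcomplex[OF sub_Crit finite_K] r' r Suc by (simp add: cycles_Suc)
    ultimately show ?thesis using fK Suc by (simp add: cycles_Suc boundary_add)
  qed
qed

lemma cycles_matched:
  "cycles K c i = {r + b | r b. r \<in> cycles Crit c i \<and> b \<in> boundary K c (Suc i) ` chains Src (Suc i)}"
proof (intro set_eqI iffI)
  fix f assume "f \<in> cycles K c i"
  then obtain r q where "r \<in> cycles Crit c i" "q \<in> chains Src (Suc i)" "f = r + boundary K c (Suc i) q"
    by (rule matched_cycle_decompose)
  then show "f \<in> {r + b | r b. r \<in> cycles Crit c i \<and> b \<in> boundary K c (Suc i) ` chains Src (Suc i)}"
    by blast
next
  fix f assume "f \<in> {r + b | r b. r \<in> cycles Crit c i \<and> b \<in> boundary K c (Suc i) ` chains Src (Suc i)}"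
  then obtain r q where "r \<in> cycles Crit c i" "q \<in> chains Src (Suc i)" "f = r + boundary K c (Suc i) q"
    by blast
  then show "f \<in> cycles K c i" using matched_sum_in_cycles by simp
qed

lemma boundaries_matched:
  "boundaries K c i =
     {r + b | r b. r \<in> boundaries Crit c i \<and> b \<in> boundary K c (Suc i) ` chains Src (Suc i)}"
proof (intro set_eqI iffI)
  fix z assume "z \<in> boundaries K c i"
  then obtain f where f: "f \<in> chains K (Suc i)" "z = boundary K c (Suc i) f"
    by (auto simp: boundaries_def)
  obtain r p q where rpq: "r \<in> chains Crit (Suc i)" "p \<in> chains Src (Suc i)"
    "q \<in> chains Src (Suc (Suc i))" "f = r + p + boundary K c (Suc (Suc i)) q"
    using chains_decompose f(1) by blast
  have "boundary K c (Suc i) (boundary K c (Suc (Suc i)) q) = 0"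
    using boundary_boundary_Src rpq(3) by simp
  then have "z = boundary Crit c (Suc i) r + boundary K c (Suc i) p"
    using f(2) rpq(4) boundary_subcomplex[OF sub_Crit finite_K rpq(1)] by (simp add: boundary_add)
  then show "z \<in> {r + b | r b. r \<in> boundaries Crit c i \<and> b \<in> boundary K c (Suc i) ` chains Src (Suc i)}"
    using rpq(1,2) by (auto simp: boundaries_def)
next
  fix z assume "z \<in> {r + b | r b. r \<in> boundaries Crit c i \<and> b \<in> boundary K c (Suc i) ` chains Src (Suc i)}"
  then obtain r p where rp: "r \<in> chains Crit (Suc i)" "p \<in> chains Src (Suc i)"
    "z = boundary Crit c (Suc i) r + boundary K c (Suc i) p"
    by (auto simp: boundaries_def)
  then have "z = boundary K c (Suc i) (r + p)"
    using boundary_subcomplex[OF sub_Crit finite_K rp(1)] by (simp add: boundary_add)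
  moreover have "r + p \<in> chains K (Suc i)"
    using subcomplex_chains[OF sub_Crit rp(1)] chains_Src_subset[OF rp(2)] by simp
  ultimately show "z \<in> boundaries K c i" by (auto simp: boundaries_def)
qed

lemma homology_dim_matched: "homology_dim K c i = homology_dim Crit c i"
proof -
  let ?M = "boundary K c (Suc i) ` chains Src (Suc i)"
  obtain F :: "('b \<Rightarrow> 'k) set" where F: "finite F" "chains K i \<subseteq> kv.span F"
    using finite_span_chains finite_K by blast
  have M: "kv.subspace ?M" "?M \<subseteq> kv.span F"
    using module_hom.subspace_image[OF boundary_module_hom chains_subspace] F(2) boundary_in_chains
    by blast+
  have span: "S \<subseteq> kv.span F" if "S \<subseteq> chains Crit i" for S
    using that F(2) subcomplex_chains[OF sub_Crit, of _ i] by blast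
  have Int_0: "S \<inter> ?M = {0}" if "S \<subseteq> chains Crit i" "kv.subspace S" for S
  proof -
    have "S \<inter> ?M \<subseteq> {0}" using that(1) matched_chain_eq_0 by fastforce
    then show ?thesis using kv.subspace_0[OF that(2)] kv.subspace_0[OF M(1)] by blast
  qed
  have "kv.dim (cycles K c i) = kv.dim (cycles Crit c i) + kv.dim ?M"
    unfolding cycles_matched
    by (rule kv.dim_sums_Int_zero[OF cycles_subspace M(1)
          Int_0[OF cycles_subset_chains cycles_subspace] span[OF cycles_subset_chains] M(2) F(1)])
  moreover have "kv.dim (boundaries K c i) = kv.dim (boundaries Crit c i) + kv.dim ?M"
    unfolding boundaries_matched
    by (rule kv.dim_sums_Int_zero[OF boundaries_subspace M(1)
          Int_0[OF boundaries_subset_chains boundaries_subspace] span[OF boundaries_subset_chains]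
          M(2) F(1)])
  ultimately show ?thesis by (simp add: homology_dim_def)
qed

end

context
  fixes K K' :: "nat \<Rightarrow> 'b set" and c c' :: "'b \<Rightarrow> 'b \<Rightarrow> 'k::field"
    and \<Phi> :: "nat \<Rightarrow> ('b \<Rightarrow> 'k) \<Rightarrow> 'b \<Rightarrow> 'k"
  assumes linear: "\<And>j. module_hom kscale kscale (\<Phi> j)"
    and bij: "\<And>j. bij_betw (\<Phi> j) (chains K j) (chains K' j)"
    and commute: "\<And>j f. f \<in> chains K (Suc j) \<Longrightarrow>
      boundary K' c' (Suc j) (\<Phi> (Suc j) f) = \<Phi> j (boundary K c (Suc j) f)"
begin

lemma cycles_chain_iso: "cycles K' c' i = \<Phi> i ` cycles K c i"
proof (cases i)
  case 0
  then show ?thesis using bij by (simp add: cycles_def bij_betw_def)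
next
  case (Suc j)
  have "boundary K' c' i (\<Phi> i f) = 0 \<longleftrightarrow> boundary K c i f = 0" if "f \<in> chains K i" for f
  proof -
    have "boundary K' c' i (\<Phi> i f) = \<Phi> j (boundary K c i f)" using commute that Suc by simp
    moreover have "\<Phi> j 0 = 0" using module_hom.zero[OF linear] .
    moreover have "inj_on (\<Phi> j) (chains K j)" using bij by (simp add: bij_betw_def)
    ultimately show ?thesis
      using inj_on_eq_iff[of "\<Phi> j" "chains K j" "boundary K c i f" 0] boundary_in_chains[of K c j f] Suc
      by simp
  qed
  moreover have "chains K' (Suc j) = \<Phi> (Suc j) ` chains K (Suc j)" using bij by (simp add: bij_betw_def)
  ultimately show ?thesis unfolding Suc cycles_Suc by auto
qed

lemma boundaries_chain_iso: "boundaries K' c' i = \<Phi> i ` boundaries K c i"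
proof -
  have "boundaries K' c' i = boundary K' c' (Suc i) ` \<Phi> (Suc i) ` chains K (Suc i)"
    using bij by (simp add: boundaries_def bij_betw_def)
  also have "\<dots> = \<Phi> i ` boundary K c (Suc i) ` chains K (Suc i)"
    unfolding image_image using commute by (intro image_cong) simp_all
  finally show ?thesis unfolding boundaries_def .
qed

lemma homology_dim_chain_iso:
  assumes finite: "finite (K i)"
  shows "homology_dim K' c' i = homology_dim K c i"
proof -
  have inj: "inj_on (\<Phi> i) (chains K i)" using bij by (simp add: bij_betw_def)
  obtain F :: "('b \<Rightarrow> 'k) set" where F: "finite F" "chains K i \<subseteq> kv.span F"
    using finite_span_chains finite by blast
  have "kv.dim (cycles K' c' i) = kv.dim (cycles K c i)"
    unfolding cycles_chain_iso using cycles_subset_chains[of K c i] F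
    by (intro kv.dim_image_inj_on linear cycles_subspace inj_on_subset[OF inj]) auto
  moreover have "kv.dim (boundaries K' c' i) = kv.dim (boundaries K c i)"
    unfolding boundaries_chain_iso using boundaries_subset_chains[of K c i] F
    by (intro kv.dim_image_inj_on linear boundaries_subspace inj_on_subset[OF inj]) auto
  ultimately show ?thesis by (simp add: homology_dim_def)
qed

end

definition signed_pullback :: "('b \<Rightarrow> 'b) \<Rightarrow> ('b \<Rightarrow> 'k::field) \<Rightarrow> 'b set \<Rightarrow> ('b \<Rightarrow> 'k) \<Rightarrow> 'b \<Rightarrow> 'k"
  where "signed_pullback \<phi> \<epsilon> A h = (\<lambda>x. if x \<in> A then \<epsilon> x * h (\<phi> x) else 0)"

lemma signed_pullback_module_hom: "module_hom kscale kscale (signed_pullback \<phi> \<epsilon> A)"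
  unfolding module_hom_iff using kv.module_axioms
  by (auto simp: signed_pullback_def fun_eq_iff kscale_def algebra_simps)

context
  fixes K K' :: "nat \<Rightarrow> 'b set" and \<phi> :: "'b \<Rightarrow> 'b" and \<epsilon> :: "'b \<Rightarrow> 'k::field"
  assumes bij: "\<And>i. bij_betw \<phi> (K i) (K' i)" and sign: "\<And>x. \<epsilon> x * \<epsilon> x = 1"
begin

lemma bij_betw_signed_pullback:
  "bij_betw (signed_pullback \<phi> \<epsilon> (K j)) (chains K' j) (chains K j)"
proof (rule bij_betw_imageI)
  show "inj_on (signed_pullback \<phi> \<epsilon> (K j)) (chains K' j)"
  proof (rule inj_onI, rule ext)
    fix h h' z
    assume h: "h \<in> chains K' j" "h' \<in> chains K' j"
      and eq: "signed_pullback \<phi> \<epsilon> (K j) h = signed_pullback \<phi> \<epsilon> (K j) h'"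
    show "h z = h' z"
    proof (cases "z \<in> K' j")
      case True
      then obtain x where "x \<in> K j" "z = \<phi> x" using bij[of j] by (auto simp: bij_betw_def)
      then show ?thesis using fun_cong[OF eq, of x] sign[of x] by (auto simp: signed_pullback_def)
    next
      case False
      then show ?thesis using h by (simp add: chains_def)
    qed
  qed
  show "signed_pullback \<phi> \<epsilon> (K j) ` chains K' j = chains K j"
  proof (intro equalityI subsetI)
    fix f assume "f \<in> signed_pullback \<phi> \<epsilon> (K j) ` chains K' j"
    then show "f \<in> chains K j" by (auto simp: signed_pullback_def chains_def)
  next
    fix f :: "'b \<Rightarrow> 'k" assume f: "f \<in> chains K j"
    define \<psi> where "\<psi> = inv_into (K j) \<phi>"
    have \<psi>: "\<psi> (\<phi> x) = x" if "x \<in> K j" for x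
      using bij_betw_inv_into_left[OF bij that] by (simp add: \<psi>_def)
    let ?h = "\<lambda>z. if z \<in> K' j then \<epsilon> (\<psi> z) * f (\<psi> z) else 0"
    have "signed_pullback \<phi> \<epsilon> (K j) ?h = f"
      using f bij[of j] \<psi> sign
      by (auto simp: signed_pullback_def chains_def fun_eq_iff bij_betw_def mult.assoc[symmetric])
    moreover have "?h \<in> chains K' j" by (simp add: chains_def)
    ultimately show "f \<in> signed_pullback \<phi> \<epsilon> (K j) ` chains K' j" by (rule image_eqI[OF sym])
  qed
qed

lemma boundary_signed_pullback:
  assumes coef: "\<And>i x y. x \<in> K (Suc i) \<Longrightarrow> y \<in> K i \<Longrightarrow> c' (\<phi> x) (\<phi> y) = \<epsilon> x * \<epsilon> y * c x y"
  shows "boundary K c (Suc j) (signed_pullback \<phi> \<epsilon> (K (Suc j)) h) =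
    signed_pullback \<phi> \<epsilon> (K j) (boundary K' c' (Suc j) h)"
proof
  fix y
  show "boundary K c (Suc j) (signed_pullback \<phi> \<epsilon> (K (Suc j)) h) y =
    signed_pullback \<phi> \<epsilon> (K j) (boundary K' c' (Suc j) h) y"
  proof (cases "y \<in> K j")
    case True
    then have "\<phi> y \<in> K' j" using bij[of j] by (auto simp: bij_betw_def)
    then have "signed_pullback \<phi> \<epsilon> (K j) (boundary K' c' (Suc j) h) y =
        \<epsilon> y * (\<Sum>z\<in>K' (Suc j). h z * c' z (\<phi> y))"
      using True by (simp add: signed_pullback_def boundary_def)
    also have "\<dots> = \<epsilon> y * (\<Sum>x\<in>K (Suc j). h (\<phi> x) * c' (\<phi> x) (\<phi> y))"
      using sum.reindex_bij_betw[OF bij[of "Suc j"], of "\<lambda>z. h z * c' z (\<phi> y)"] by simp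
    also have "\<dots> = (\<Sum>x\<in>K (Suc j). (\<epsilon> y * \<epsilon> y) * (\<epsilon> x * h (\<phi> x) * c x y))"
      using True coef by (simp add: sum_distrib_left algebra_simps)
    also have "\<dots> = boundary K c (Suc j) (signed_pullback \<phi> \<epsilon> (K (Suc j)) h) y"
      using True sign by (simp add: signed_pullback_def boundary_def)
    finally show ?thesis ..
  next
    case False
    then show ?thesis by (simp add: signed_pullback_def boundary_def)
  qed
qed

lemma homology_dim_signed_bij:
  assumes finite_K: "\<And>i. finite (K i)"
    and coef: "\<And>i x y. x \<in> K (Suc i) \<Longrightarrow> y \<in> K i \<Longrightarrow> c' (\<phi> x) (\<phi> y) = \<epsilon> x * \<epsilon> y * c x y"
  shows "homology_dim K c i = homology_dim K' c' i"
proof (rule homology_dim_chain_iso[where \<Phi> = "\<lambda>j. signed_pullback \<phi> \<epsilon> (K j)"])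
  show "finite (K' i)" using bij_betw_finite[OF bij] finite_K by blast
qed (simp_all add: signed_pullback_module_hom bij_betw_signed_pullback boundary_signed_pullback coef)

end

definition shift_grading :: "nat \<Rightarrow> (nat \<Rightarrow> 'b set) \<Rightarrow> nat \<Rightarrow> 'b set" where
  "shift_grading s K j = (if s \<le> j then K (j - s) else {})"

lemma homology_dim_shift_below: "i < s \<Longrightarrow> homology_dim (shift_grading s K) c i = 0"
  by (rule homology_dim_empty) (simp add: shift_grading_def)

lemma homology_dim_shift:
  fixes K :: "nat \<Rightarrow> 'b set" and c :: "'b \<Rightarrow> 'b \<Rightarrow> 'k::field"
  shows "homology_dim (shift_grading s K) c (i + s) = homology_dim K c i"
proof -
  have chains: "chains (shift_grading s K) (j + s) = (chains K j :: ('b \<Rightarrow> 'k) set)" for j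
    by (simp add: chains_def shift_grading_def)
  have boundary: "boundary (shift_grading s K) c (Suc j + s) = boundary K c (Suc j)" for j
    by (simp add: boundary_def fun_eq_iff shift_grading_def)
  have "cycles (shift_grading s K) c (i + s) = cycles K c i"
  proof (cases i)
    case 0
    show ?thesis
    proof (cases s)
      case 0
      then show ?thesis using \<open>i = 0\<close> chains[of 0] by (simp add: cycles_def)
    next
      case (Suc s')
      have "boundary (shift_grading s K) c s f = 0" for f :: "'b \<Rightarrow> 'k"
        using Suc by (simp add: boundary_def shift_grading_def fun_eq_iff)
      then show ?thesis using \<open>i = 0\<close> chains[of 0] Suc by (simp add: cycles_def)
    qed
  next
    case (Suc j)
    then show ?thesis using chains[of i] boundary[of j] by (simp add: cycles_def)
  qed
  moreover have "boundaries (shift_grading s K) c (i + s) = boundaries K c i"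
    using chains[of "Suc i"] boundary[of i] by (simp add: boundaries_def)
  ultimately show ?thesis by (simp add: homology_dim_def)
qed

section \<open>The Koszul complex of \<open>R/I(G)\<close>\<close>

definition to_monomial :: "'v \<Rightarrow> 'v set \<times> ('v \<Rightarrow> nat) \<Rightarrow> 'v set \<times> ('v \<Rightarrow> nat)" where
  "to_monomial a x = (fst x - {a}, (snd x)(a := Suc (snd x a)))"

definition to_exterior :: "'v \<Rightarrow> 'v set \<times> ('v \<Rightarrow> nat) \<Rightarrow> 'v set \<times> ('v \<Rightarrow> nat)" where
  "to_exterior a x = (insert a (fst x), (snd x)(a := snd x a - 1))"

lemma to_exterior_to_monomial: "a \<in> fst x \<Longrightarrow> to_exterior a (to_monomial a x) = x"
  by (cases x) (auto simp: to_monomial_def to_exterior_def fun_eq_iff)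

lemma to_monomial_to_exterior: "a \<notin> fst x \<Longrightarrow> snd x a \<ge> 1 \<Longrightarrow> to_monomial a (to_exterior a x) = x"
  by (cases x) (auto simp: to_monomial_def to_exterior_def fun_eq_iff)

lemma to_monomial_commute: "a \<noteq> b \<Longrightarrow> to_monomial a (to_monomial b x) = to_monomial b (to_monomial a x)"
  by (auto simp: to_monomial_def fun_eq_iff)

lemma mem_kbasis_iff:
  "(S, m) \<in> kbasis V E i d \<longleftrightarrow> S \<subseteq> V \<and> card S = i \<and> i \<le> d \<and> (\<forall>u. u \<notin> V \<longrightarrow> m u = 0) \<and>
     sum m V = d - i \<and> std_mono E m"
  by (auto simp: kbasis_def monoms_def)

lemma kcoef_to_monomial:
  assumes "s \<in> fst x"
  shows "kcoef x (to_monomial s x) = ((- 1) ^ card {t \<in> fst x. t < s} :: 'k::field)"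
proof -
  have "fst x - (fst x - {s}) = {s}" using assms by auto
  then show ?thesis by (cases x) (simp add: kcoef_def to_monomial_def)
qed

lemma kcoef_to_monomial_nonzero: "s \<in> fst x \<Longrightarrow> kcoef x (to_monomial s x) \<noteq> (0 :: 'k::field)"
  by (simp add: kcoef_to_monomial)

lemma kcoef_nonzeroD:
  assumes "kcoef x y \<noteq> (0 :: 'k::field)"
  obtains s where "s \<in> fst x" "y = to_monomial s x"
proof -
  obtain S m T m' where xy: "x = (S, m)" "y = (T, m')" by (cases x, cases y)
  have c: "T \<subseteq> S" "card (S - T) = 1" "m' = m(the_elem (S - T) := Suc (m (the_elem (S - T))))"
    using assms xy by (auto simp: kcoef_def split: if_splits)
  obtain s where s: "S - T = {s}" using c(2) card_1_singletonE by blast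
  then have "s \<in> S" "T = S - {s}" using c(1) by auto
  then show ?thesis using that c(3) s xy by (simp add: to_monomial_def)
qed

lemma kcoef_eq_0: "(\<And>s. s \<in> fst x \<Longrightarrow> y \<noteq> to_monomial s x) \<Longrightarrow> kcoef x y = 0"
  by (metis kcoef_nonzeroD)

lemma kcoef_nonzero_to_monomial:
  assumes "kcoef x y \<noteq> (0 :: 'k::field)" "a \<in> fst x" "a \<notin> fst y"
  shows "y = to_monomial a x"
  using assms by (elim kcoef_nonzeroD) (auto simp: to_monomial_def)

lemma std_mono_le: "std_mono E m \<Longrightarrow> (\<And>u. m' u \<le> m u) \<Longrightarrow> std_mono E m'"
  unfolding std_mono_def by (metis le_zero_eq)

lemma sum_fun_upd_add:
  assumes "finite V" "s \<in> V"
  shows "sum (m(s := a)) V + m s = sum m V + (a :: nat)"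
  using sum.remove[OF assms, of "m(s := a)"] sum.remove[OF assms, of m]
  by (simp add: sum.cong[of "V - {s}" "V - {s}" "m(s := a)" m])

lemma to_monomial_in_kbasis:
  assumes V: "finite V" and x: "x \<in> kbasis V E (Suc j) d" and s: "s \<in> fst x"
    and std: "std_mono E (snd (to_monomial s x))"
  shows "to_monomial s x \<in> kbasis V E j d"
proof -
  obtain S m where Sm: "x = (S, m)" by (cases x)
  have x': "S \<subseteq> V" "card S = Suc j" "Suc j \<le> d" "\<forall>u. u \<notin> V \<longrightarrow> m u = 0" "sum m V = d - Suc j"
    using x Sm by (auto simp: mem_kbasis_iff)
  have "s \<in> V" "finite S" using s Sm x'(1) finite_subset[OF x'(1) V] by auto
  then show ?thesis
    using x' s std sum_fun_upd_add[OF V \<open>s \<in> V\<close>, of m "Suc (m s)"] Sm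
    by (auto simp: mem_kbasis_iff to_monomial_def)
qed

lemma to_exterior_in_kbasis:
  assumes V: "finite V" and y: "y \<in> kbasis V E j d" and sV: "s \<in> V" and sT: "s \<notin> fst y"
    and ms: "snd y s \<ge> 1"
  shows "to_exterior s y \<in> kbasis V E (Suc j) d"
proof -
  obtain T m where Tm: "y = (T, m)" by (cases y)
  have y': "T \<subseteq> V" "card T = j" "\<forall>u. u \<notin> V \<longrightarrow> m u = 0" "sum m V = d - j" "std_mono E m"
    using y Tm by (auto simp: mem_kbasis_iff)
  have "m s \<le> sum m V" using member_le_sum[OF sV, of m] V by simp
  then have jd: "Suc j \<le> d" using ms y'(4) Tm by simp
  have "std_mono E (m(s := m s - 1))" by (rule std_mono_le[OF y'(5)]) auto
  moreover have "card (insert s T) = Suc j" using finite_subset[OF y'(1) V] sT y'(2) Tm by simp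
  ultimately show ?thesis
    using y' sV jd ms Tm sum_fun_upd_add[OF V sV, of m "m s - 1"]
    by (auto simp: mem_kbasis_iff to_exterior_def)
qed

lemma finite_monoms:
  assumes V: "finite V" shows "finite (monoms V e)"
proof -
  have "monoms V e \<subseteq> {m. \<forall>x. (x \<in> V \<longrightarrow> m x \<in> {0..e}) \<and> (x \<notin> V \<longrightarrow> m x = 0)}"
    using member_le_sum[of _ V] V by (fastforce simp: monoms_def)
  then show ?thesis by (rule finite_subset) (rule finite_set_of_finite_funs[OF V], simp)
qed

lemma finite_kbasis: "finite V \<Longrightarrow> finite (kbasis V E i d)"
  by (rule finite_subset[of _ "Pow V \<times> monoms V (d - i)"]) (auto simp: kbasis_def finite_monoms)

lemma kcoef_twice_nonzeroD:
  assumes "kcoef x y * kcoef y z \<noteq> (0 :: 'k::field)"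
  obtains a b where "a \<in> fst x" "b \<in> fst x" "a \<noteq> b" "y = to_monomial a x" "z = to_monomial b y"
proof -
  obtain a where a: "a \<in> fst x" "y = to_monomial a x"
    using kcoef_nonzeroD[of x y] assms by auto
  obtain b where b: "b \<in> fst y" "z = to_monomial b y"
    using kcoef_nonzeroD[of y z] assms by auto
  have "fst y = fst x - {a}" by (simp add: a(2) to_monomial_def)
  then show ?thesis using that[of a b] a b by blast
qed

lemma kcoef_twice_cancel:
  assumes fin: "finite (fst x)" and st: "s \<in> fst x" "t \<in> fst x" "s < t"
  shows "kcoef x (to_monomial s x) * kcoef (to_monomial s x) (to_monomial t (to_monomial s x))
       + kcoef x (to_monomial t x) * kcoef (to_monomial t x) (to_monomial s (to_monomial t x))
       = (0 :: 'k::field)"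
proof -
  define S where "S = fst x"
  define A where "A = card {u \<in> S. u < s}"
  define B where "B = card {u \<in> S - {s}. u < t}"
  have fst_s: "fst (to_monomial s x) = S - {s}" and fst_t: "fst (to_monomial t x) = S - {t}"
    by (simp_all add: S_def to_monomial_def)
  have "{u \<in> S. u < t} = insert s {u \<in> S - {s}. u < t}" using st by (auto simp: S_def)
  then have card_t: "card {u \<in> S. u < t} = Suc B"
    using fin by (simp add: B_def S_def)
  have "{u \<in> S - {t}. u < s} = {u \<in> S. u < s}" using st by auto
  then have card_s: "card {u \<in> fst (to_monomial t x). u < s} = A"
    by (simp add: fst_t A_def)
  have "t \<in> fst (to_monomial s x)" "s \<in> fst (to_monomial t x)"
    using st by (auto simp: fst_s fst_t S_def)
  then have "kcoef (to_monomial s x) (to_monomial t (to_monomial s x)) = ((- 1) ^ B :: 'k)"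
    "kcoef (to_monomial t x) (to_monomial s (to_monomial t x)) = ((- 1) ^ A :: 'k)"
    unfolding B_def fst_s[symmetric] card_s[symmetric] by (simp_all only: kcoef_to_monomial)
  moreover have "kcoef x (to_monomial s x) = ((- 1) ^ A :: 'k)"
    "kcoef x (to_monomial t x) = ((- 1) ^ Suc B :: 'k)"
    unfolding A_def card_t[symmetric] S_def by (simp_all only: kcoef_to_monomial st)
  ultimately show ?thesis by simp
qed

lemma kcoef_twice_nonzero_middle:
  assumes "kcoef x y * kcoef y (to_monomial t (to_monomial s x)) \<noteq> (0 :: 'k::field)"
  shows "y = to_monomial s x \<or> y = to_monomial t x"
proof -
  obtain a b where ab: "a \<in> fst x" "b \<in> fst x" "a \<noteq> b" "y = to_monomial a x"
    "to_monomial t (to_monomial s x) = to_monomial b y"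
    using assms by (rule kcoef_twice_nonzeroD)
  then have "fst x - {a} - {b} = fst x - {s} - {t}" by (simp add: to_monomial_def)
  then have "a = s \<or> a = t" using ab(1) by blast
  then show ?thesis using ab(4) by blast
qed

lemma kcoef_square_sum:
  fixes V :: "'v::linorder set"
  assumes V: "finite V" and x: "x \<in> kbasis V E (Suc (Suc j)) d" and z: "z \<in> kbasis V E j d"
  shows "(\<Sum>y\<in>kbasis V E (Suc j) d. kcoef x y * kcoef y z) = (0 :: 'k::field)"
proof (cases "\<exists>y\<in>kbasis V E (Suc j) d. kcoef x y * kcoef y z \<noteq> (0 :: 'k)")
  case False
  then show ?thesis by (intro sum.neutral) blast
next
  case True
  let ?K1 = "kbasis V E (Suc j) d"
  obtain a b where ab: "a \<in> fst x" "b \<in> fst x" "a \<noteq> b" "z = to_monomial b (to_monomial a x)"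
    using True kcoef_twice_nonzeroD by metis
  define s t where "s = min a b" and "t = max a b"
  have st: "s \<in> fst x" "t \<in> fst x" "s < t"
    using ab by (auto simp: s_def t_def min_def max_def)
  have z_st: "z = to_monomial t (to_monomial s x)" "z = to_monomial s (to_monomial t x)"
    using ab to_monomial_commute[of a b] by (auto simp: s_def t_def min_def max_def)
  have fin: "finite (fst x)" using x V finite_subset by (cases x) (auto simp: mem_kbasis_iff)
  have std_z: "std_mono E (snd z)" using z by (cases z) (simp add: mem_kbasis_iff)
  have in_K1: "to_monomial u x \<in> ?K1" if "u \<in> {s, t}" for u
  proof (rule to_monomial_in_kbasis[OF V x])
    show "u \<in> fst x" using that st by blast
    show "std_mono E (snd (to_monomial u x))"
      by (rule std_mono_le[OF std_z]) (use that z_st in \<open>auto simp: to_monomial_def\<close>)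
  qed
  have only: "kcoef x y * kcoef y z = (0 :: 'k)" if "y \<in> ?K1 - {to_monomial s x, to_monomial t x}" for y
    using that kcoef_twice_nonzero_middle[of x y t s] z_st(1) by auto
  have "to_monomial s x \<noteq> to_monomial t x" using st by (auto simp: to_monomial_def)
  have "(\<Sum>y\<in>?K1. kcoef x y * kcoef y z) =
      (\<Sum>y\<in>{to_monomial s x, to_monomial t x}. kcoef x y * kcoef y z :: 'k)"
  proof (rule sum.mono_neutral_right[OF finite_kbasis[OF V]])
    show "{to_monomial s x, to_monomial t x} \<subseteq> ?K1" using in_K1 by simp
    show "\<forall>y\<in>?K1 - {to_monomial s x, to_monomial t x}. kcoef x y * kcoef y z = (0 :: 'k)"
      using only by blast
  qed
  also have "\<dots> = kcoef x (to_monomial s x) * kcoef (to_monomial s x) z +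
      kcoef x (to_monomial t x) * kcoef (to_monomial t x) z"
    using \<open>to_monomial s x \<noteq> to_monomial t x\<close> by simp
  also have "\<dots> = 0"
    using kcoef_twice_cancel[OF fin st] z_st by simp
  finally show ?thesis .
qed

lemma koszul_is_complex:
  fixes V :: "'v::linorder set"
  assumes V: "finite V"
  shows "is_complex (\<lambda>j. kbasis V E j d) (kcoef :: _ \<Rightarrow> _ \<Rightarrow> 'k::field)"
  unfolding is_complex_def
proof (intro allI ballI ext)
  fix j z and f :: "'v set \<times> ('v \<Rightarrow> nat) \<Rightarrow> 'k"
  let ?K = "\<lambda>j. kbasis V E j d"
  show "boundary ?K kcoef (Suc j) (boundary ?K kcoef (Suc (Suc j)) f) z = 0 z"
  proof (cases "z \<in> ?K j")
    case True
    have "boundary ?K kcoef (Suc j) (boundary ?K kcoef (Suc (Suc j)) f) z =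
        (\<Sum>y\<in>?K (Suc j). \<Sum>x\<in>?K (Suc (Suc j)). f x * (kcoef x y * kcoef y z))"
      using True by (simp add: boundary_def sum_distrib_right mult.assoc)
    also have "\<dots> = (\<Sum>x\<in>?K (Suc (Suc j)). f x * (\<Sum>y\<in>?K (Suc j). kcoef x y * kcoef y z))"
      by (subst sum.swap) (simp add: sum_distrib_left)
    also have "\<dots> = 0"
      by (intro sum.neutral) (simp add: kcoef_square_sum[OF V _ True])
    finally show ?thesis by simp
  next
    case False
    then show ?thesis by (simp add: boundary_def)
  qed
qed

lemma betti_nat_eq_homology_dim:
  "betti_nat TYPE('k::field) V E i d = homology_dim (\<lambda>j. kbasis V E j d) (kcoef :: _ \<Rightarrow> _ \<Rightarrow> 'k) i"
proof -
  have "kchains V E j d = (chains (\<lambda>j. kbasis V E j d) j :: (_ \<Rightarrow> 'k) set)" for j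
    by (simp add: kchains_def chains_def)
  moreover have "kdiff V E j d = (boundary (\<lambda>j. kbasis V E j d) kcoef j :: (_ \<Rightarrow> 'k) \<Rightarrow> _)" for j
    by (simp add: kdiff_def boundary_def fun_eq_iff)
  ultimately show ?thesis
    by (simp add: betti_nat_def homology_dim_def kcycles_def cycles_def kboundaries_def
        boundaries_def)
qed

lemma subcomplex_by_predicate:
  assumes P: "\<And>j. P j = {x \<in> K j. p x}"
    and step: "\<And>j x s. x \<in> K (Suc j) \<Longrightarrow> p x \<Longrightarrow> s \<in> fst x \<Longrightarrow>
        to_monomial s x \<in> K j \<Longrightarrow> p (to_monomial s x)"
  shows "subcomplex P K (kcoef :: _ \<Rightarrow> _ \<Rightarrow> 'k::field)"
  unfolding subcomplex_def
proof (intro conjI allI impI)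
  fix j show "P j \<subseteq> K j" using P by auto
next
  fix j x y assume x: "x \<in> P (Suc j)" and y: "y \<in> K j" and nz: "kcoef x y \<noteq> (0 :: 'k)"
  from nz obtain s where "s \<in> fst x" "y = to_monomial s x" by (rule kcoef_nonzeroD)
  then show "y \<in> P j" using step[of x j s] x y P by auto
qed

definition crossings :: "'v::linorder set \<Rightarrow> 'v set \<Rightarrow> nat" where
  "crossings F S = (\<Sum>u\<in>S - F. card {t \<in> F. t < u})"

lemma crossings_insert:
  "finite T \<Longrightarrow> s \<notin> T \<Longrightarrow> s \<notin> F \<Longrightarrow>
    crossings F (insert s T) = card {t \<in> F. t < s} + crossings F T"
  by (simp add: crossings_def insert_Diff_if)

lemma card_less_Diff:
  assumes "finite S" "F \<subseteq> S"
  shows "card {t \<in> S. t < s} = card {t \<in> S - F. t < s} + card {t \<in> F. t < s}"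
proof -
  have U: "{t \<in> S. t < s} = {t \<in> S - F. t < s} \<union> {t \<in> F. t < s}" using assms(2) by auto
  have A: "finite {t \<in> S - F. t < s}" and B: "finite {t \<in> F. t < s}"
    using assms finite_subset[OF assms(2)] by auto
  have "{t \<in> S - F. t < s} \<inter> {t \<in> F. t < s} = {}" by blast
  then show ?thesis by (simp only: U card_Un_disjoint[OF A B])
qed

lemma kcoef_fun_upd_outside:
  assumes w: "w \<notin> S" "m w = m' w"
  shows "kcoef (S, m(w := a)) (T, m'(w := a)) = (kcoef (S, m) (T, m') :: 'k::field)"
proof (cases "\<exists>s\<in>S. (T, m') = to_monomial s (S, m)")
  case True
  then obtain s where s: "s \<in> S" "(T, m') = to_monomial s (S, m)" by blast
  then have "(T, m'(w := a)) = to_monomial s (S, m(w := a))"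
    using w by (auto simp: to_monomial_def fun_upd_twist)
  then show ?thesis using s by (simp add: kcoef_to_monomial)
next
  case False
  have "kcoef (S, m(w := a)) (T, m'(w := a)) = (0 :: 'k)"
  proof (rule ccontr)
    assume "kcoef (S, m(w := a)) (T, m'(w := a)) \<noteq> (0 :: 'k)"
    then obtain s where "s \<in> S" "(T, m'(w := a)) = to_monomial s (S, m(w := a))"
      by (auto elim: kcoef_nonzeroD)
    moreover from this have eq: "m'(w := a) = (m(s := Suc (m s)))(w := a)"
      using w by (auto simp: to_monomial_def fun_upd_twist)
    have "m' = m(s := Suc (m s))"
    proof
      fix u show "m' u = (m(s := Suc (m s))) u"
        using fun_cong[OF eq, of u] w \<open>s \<in> S\<close> by (cases "u = w") auto
    qed
    ultimately show False using False by (auto simp: to_monomial_def)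
  qed
  moreover have "kcoef (S, m) (T, m') = (0 :: 'k)"
    using False by (intro kcoef_eq_0) auto
  ultimately show ?thesis by simp
qed

lemma kcoef_Diff:
  assumes fin: "finite S" and F: "F \<subseteq> S" "F \<subseteq> T"
  shows "kcoef (S - F, m) (T - F, m') =
    (- 1) ^ (crossings F S + crossings F T) * (kcoef (S, m) (T, m') :: 'k::field)"
proof (cases "\<exists>s\<in>S. (T, m') = to_monomial s (S, m)")
  case True
  then obtain s where s: "s \<in> S" "(T, m') = to_monomial s (S, m)" by blast
  then have T: "T = S - {s}" and m': "m' = m(s := Suc (m s))" by (simp_all add: to_monomial_def)
  have sF: "s \<in> S - F" using s(1) F(2) T by auto
  have "crossings F S = card {t \<in> F. t < s} + crossings F T"
    using crossings_insert[of T s F] fin sF s(1) T by (simp add: insert_absorb)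
  then have "(- 1 :: 'k) ^ (crossings F S + crossings F T) * (- 1) ^ card {t \<in> S. t < s} =
      (- 1) ^ (card {t \<in> S - F. t < s} + 2 * (crossings F T + card {t \<in> F. t < s}))"
    unfolding card_less_Diff[OF fin F(1)] power_add[symmetric] by (simp add: mult_2 ac_simps)
  also have "\<dots> = (- 1) ^ card {t \<in> S - F. t < s}" by (simp add: power_add power_mult)
  finally have sign: "(- 1 :: 'k) ^ (crossings F S + crossings F T) * (- 1) ^ card {t \<in> S. t < s} =
      (- 1) ^ card {t \<in> S - F. t < s}" .
  have "kcoef (S - F, m) (T - F, m') = ((- 1) ^ card {t \<in> S - F. t < s} :: 'k)"
  proof -
    have "(T - F, m') = to_monomial s (S - F, m)" using T m' by (auto simp: to_monomial_def)
    then show ?thesis using kcoef_to_monomial[of s "(S - F, m)"] sF by simp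
  qed
  moreover have "kcoef (S, m) (T, m') = ((- 1) ^ card {t \<in> S. t < s} :: 'k)"
    using kcoef_to_monomial[of s "(S, m)"] s by simp
  ultimately show ?thesis using sign by simp
next
  case False
  have "kcoef (S - F, m) (T - F, m') = (0 :: 'k)"
  proof (rule ccontr)
    assume "kcoef (S - F, m) (T - F, m') \<noteq> (0 :: 'k)"
    then obtain s where "s \<in> S - F" "(T - F, m') = to_monomial s (S - F, m)"
      by (auto elim: kcoef_nonzeroD)
    moreover from this have "T = S - {s}" using F by (auto simp: to_monomial_def)
    ultimately show False using False by (auto simp: to_monomial_def)
  qed
  moreover have "kcoef (S, m) (T, m') = (0 :: 'k)"
    using False by (intro kcoef_eq_0) auto
  ultimately show ?thesis by simp
qed

lemma sum_eq_if_zero_outside: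
  "finite V \<Longrightarrow> W \<subseteq> V \<Longrightarrow> (\<forall>u. u \<notin> W \<longrightarrow> m u = 0) \<Longrightarrow> sum m V = sum m W"
  by (rule sum.mono_neutral_right) auto

lemma kbasis_induced:
  assumes G: "simple_graph V E" and W: "W \<subseteq> V"
  shows "(S, m) \<in> kbasis W (induced E W) j d \<longleftrightarrow>
    (S, m) \<in> kbasis V E j d \<and> S \<subseteq> W \<and> (\<forall>u. u \<notin> W \<longrightarrow> m u = 0)"
proof -
  have V: "finite V" using G by (simp add: simple_graph_def)
  have "std_mono (induced E W) m \<longleftrightarrow> std_mono E m" if "\<forall>u. u \<notin> W \<longrightarrow> m u = 0"
  proof
    assume std: "std_mono (induced E W) m"
    show "std_mono E m"
      unfolding std_mono_def
    proof
      fix e assume e: "e \<in> E"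
      show "\<exists>u\<in>e. m u = 0"
      proof (cases "e \<subseteq> W")
        case True
        then show ?thesis using std e by (auto simp: std_mono_def induced_def)
      next
        case False
        then show ?thesis using that by blast
      qed
    qed
  qed (auto simp: std_mono_def induced_def)
  then show ?thesis
    using W sum_eq_if_zero_outside[OF V W] by (auto simp: mem_kbasis_iff)
qed

section \<open>Cancellation at a leaf\<close>

lemma sum_Pow_card:
  fixes f :: "nat \<Rightarrow> 'a::comm_semiring_1"
  assumes "finite N"
  shows "(\<Sum>J\<in>Pow N. f (card J)) = (\<Sum>k = 0..card N. of_nat (card N choose k) * f k)"
proof -
  have "(\<Sum>J\<in>Pow N. f (card J)) = (\<Sum>k = 0..card N. \<Sum>J\<in>{J \<in> Pow N. card J = k}. f (card J))"
    by (rule sum.group[symmetric]) (use assms card_mono in auto)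
  also have "\<dots> = (\<Sum>k = 0..card N. of_nat (card N choose k) * f k)"
    using n_subsets[OF assms] by (intro sum.cong refl) (simp add: Pow_def conj_commute)
  finally show ?thesis .
qed

lemma edge_eq_neighbour:
  assumes "simple_graph V E" "e \<in> E" "u \<in> e"
  obtains w where "w \<in> neighbours E u" "e = {u, w}"
proof -
  obtain a b where ab: "e = {a, b}" using assms(1,2) by (auto simp: simple_graph_def)
  then show ?thesis using that assms(2,3) by (auto simp: neighbours_def insert_commute)
qed

lemma neighbour_in_V:
  assumes "simple_graph V E" "w \<in> neighbours E u"
  shows "w \<in> V" "w \<noteq> u"
  using assms by (auto simp: simple_graph_def neighbours_def doubleton_eq_iff)

lemma degree_one_neighbours: "degree E u = 1 \<Longrightarrow> w \<in> neighbours E u \<Longrightarrow> neighbours E u = {w}"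
  unfolding degree_def by (metis card_1_singletonE singletonD)

locale leaf_edge =
  fixes V :: "'v::linorder set" and E :: "'v set set" and v v1 :: 'v and N :: "'v set"
  assumes simple: "simple_graph V E"
    and v_in_V: "v \<in> V"
    and neighbours_v: "neighbours E v = insert v1 N"
    and v1_notin_N: "v1 \<notin> N"
    and neighbours_v1: "neighbours E v1 = {v}"
begin

definition "V'' = V - insert v (insert v1 N)"
definition "E'' = induced E V''"

lemma finite_V: "finite V"
  using simple by (simp add: simple_graph_def)

lemma neighbour_v: "w \<in> insert v1 N \<Longrightarrow> {v, w} \<in> E \<and> w \<in> V \<and> w \<noteq> v"
  using neighbours_v neighbour_in_V[OF simple, of w v] by (auto simp: neighbours_def)

lemma v1_in_V: "v1 \<in> V" and v_ne_v1: "v \<noteq> v1" and N_subset_V: "N \<subseteq> V"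
  using neighbour_v by auto

lemma edge_at_v1: "e \<in> E \<Longrightarrow> v1 \<in> e \<Longrightarrow> e = {v, v1}"
  by (erule edge_eq_neighbour[OF simple]) (auto simp: neighbours_v1 insert_commute)

lemma edge_at_v: "e \<in> E \<Longrightarrow> v \<in> e \<Longrightarrow> \<exists>w\<in>insert v1 N. e = {v, w}"
  by (erule edge_eq_neighbour[OF simple]) (auto simp: neighbours_v)

lemma V''_subset_V: "V'' \<subseteq> V"
  by (auto simp: V''_def)

lemma in_V''_iff: "u \<in> V'' \<longleftrightarrow> u \<in> V \<and> u \<noteq> v \<and> u \<notin> insert v1 N"
  by (auto simp: V''_def)

lemma kbasis_V''_iff:
  "y \<in> kbasis V'' E'' j e \<longleftrightarrow> y \<in> kbasis V E j e \<and> fst y \<subseteq> V'' \<and> (\<forall>u. u \<notin> V'' \<longrightarrow> snd y u = 0)"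
  using kbasis_induced[OF simple V''_subset_V] by (cases y) (simp add: E''_def)

lemma card_insert_v1:
  assumes "J \<subseteq> N" shows "card (insert v1 J) = card J + 1"
proof -
  have "finite J" using finite_subset[OF assms finite_subset[OF N_subset_V finite_V]] .
  moreover have "v1 \<notin> J" using assms v1_notin_N by blast
  ultimately show ?thesis by simp
qed

end

locale leaf_edge_degree = leaf_edge +
  fixes d :: nat
begin

definition "K j = kbasis V E j d"
definition "untouched j = {x \<in> K j. v1 \<notin> fst x \<and> snd x v1 = 0}"
definition "touched j = {x \<in> K j. v1 \<in> fst x \<or> snd x v1 \<ge> 1}"
definition "src1 j = {x \<in> K j. v1 \<in> fst x \<and> snd x v = 0}"
definition "tgt1 j = {x \<in> K j. v1 \<notin> fst x \<and> snd x v1 \<ge> 1}"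
definition "crit1 j = {x \<in> K j. v1 \<in> fst x \<and> snd x v \<ge> 1}"
definition "src2 j = {x \<in> crit1 j. v \<in> fst x}"
definition "tgt2 j = {x \<in> crit1 j. v \<notin> fst x \<and> snd x v \<ge> 2}"
definition "crit2 j = {x \<in> crit1 j. v \<notin> fst x \<and> snd x v = 1}"
definition "block J j = {x \<in> crit2 j. fst x \<inter> N = J}"

lemma finite_K: "finite (K j)"
  by (simp add: K_def finite_kbasis[OF finite_V])

lemma K_complex: "is_complex K (kcoef :: _ \<Rightarrow> _ \<Rightarrow> 'k::field)"
  using koszul_is_complex[OF finite_V] by (simp add: K_def[abs_def])

lemma K_edge_zero: "x \<in> K j \<Longrightarrow> e \<in> E \<Longrightarrow> \<exists>u\<in>e. snd x u = 0"
  by (cases x) (auto simp: K_def mem_kbasis_iff std_mono_def)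

lemma K_v1_v: "x \<in> K j \<Longrightarrow> snd x v1 \<ge> 1 \<Longrightarrow> snd x v = 0"
  using K_edge_zero[of x j "{v, v1}"] neighbour_v by fastforce

lemma K_v_neighbour: "x \<in> K j \<Longrightarrow> snd x v \<ge> 1 \<Longrightarrow> w \<in> insert v1 N \<Longrightarrow> snd x w = 0"
  using K_edge_zero[of x j "{v, w}"] neighbour_v by fastforce

lemma K_0: "x \<in> K 0 \<Longrightarrow> v1 \<notin> fst x \<and> v \<notin> fst x"
  using finite_subset[OF _ finite_V] by (cases x) (auto simp: K_def mem_kbasis_iff)

lemma to_monomial_in_K:
  assumes x: "x \<in> K (Suc j)" and s: "s \<in> fst x"
    and free: "\<And>e. e \<in> E \<Longrightarrow> s \<in> e \<Longrightarrow> \<exists>u\<in>e. u \<noteq> s \<and> snd x u = 0"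
  shows "to_monomial s x \<in> K j"
proof -
  have "std_mono E (snd (to_monomial s x))"
    unfolding std_mono_def
  proof
    fix e assume e: "e \<in> E"
    show "\<exists>u\<in>e. snd (to_monomial s x) u = 0"
    proof (cases "s \<in> e")
      case True
      then show ?thesis using free[OF e] by (auto simp: to_monomial_def)
    next
      case False
      then show ?thesis using K_edge_zero[OF x e] by (auto simp: to_monomial_def)
    qed
  qed
  then show ?thesis using to_monomial_in_kbasis[OF finite_V] x s by (simp add: K_def)
qed

lemma to_exterior_in_K:
  "y \<in> K j \<Longrightarrow> s \<in> V \<Longrightarrow> s \<notin> fst y \<Longrightarrow> snd y s \<ge> 1 \<Longrightarrow> to_exterior s y \<in> K (Suc j)"
  using to_exterior_in_kbasis[OF finite_V] by (simp add: K_def)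

lemma subcomplex_untouched: "subcomplex untouched K (kcoef :: _ \<Rightarrow> _ \<Rightarrow> 'k::field)"
  by (rule subcomplex_by_predicate[where p = "\<lambda>x. v1 \<notin> fst x \<and> snd x v1 = 0"])
    (auto simp: untouched_def to_monomial_def)

lemma subcomplex_touched: "subcomplex touched K (kcoef :: _ \<Rightarrow> _ \<Rightarrow> 'k::field)"
  by (rule subcomplex_by_predicate[where p = "\<lambda>x. v1 \<in> fst x \<or> snd x v1 \<ge> 1"])
    (auto simp: touched_def to_monomial_def)

lemma homology_dim_K_eq:
  "homology_dim K (kcoef :: _ \<Rightarrow> _ \<Rightarrow> 'k::field) i =
     homology_dim untouched (kcoef :: _ \<Rightarrow> _ \<Rightarrow> 'k) i + homology_dim touched (kcoef :: _ \<Rightarrow> _ \<Rightarrow> 'k) i"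
proof (rule homology_dim_Un[OF finite_K _ _ subcomplex_untouched subcomplex_touched K_complex])
  show "K j = untouched j \<union> touched j" "untouched j \<inter> touched j = {}" for j
    by (auto simp: untouched_def touched_def)
qed

lemma untouched_eq_kbasis: "untouched j = kbasis (V - {v1}) (induced E (V - {v1})) j d"
proof (intro set_eqI)
  fix x
  show "x \<in> untouched j \<longleftrightarrow> x \<in> kbasis (V - {v1}) (induced E (V - {v1})) j d"
  proof (cases x)
    case (Pair S m)
    have "S \<subseteq> V \<Longrightarrow> (\<forall>u. u \<notin> V \<longrightarrow> m u = 0) \<Longrightarrow>
        (v1 \<notin> S \<and> m v1 = 0 \<longleftrightarrow> S \<subseteq> V - {v1} \<and> (\<forall>u. u \<notin> V - {v1} \<longrightarrow> m u = 0))"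
      by auto
    then show ?thesis
      using kbasis_induced[OF simple, of "V - {v1}" S m j d] Pair
      by (auto simp: untouched_def K_def mem_kbasis_iff)
  qed
qed

lemma subcomplex_crit1: "subcomplex crit1 K (kcoef :: _ \<Rightarrow> _ \<Rightarrow> 'k::field)"
proof (rule subcomplex_by_predicate[where p = "\<lambda>x. v1 \<in> fst x \<and> snd x v \<ge> 1"])
  fix j x s
  assume x: "x \<in> K (Suc j)" "v1 \<in> fst x \<and> snd x v \<ge> 1" and "s \<in> fst x"
    and y: "to_monomial s x \<in> K j"
  show "v1 \<in> fst (to_monomial s x) \<and> snd (to_monomial s x) v \<ge> 1"
  proof (cases "s = v1")
    case True
    then have "snd (to_monomial s x) v = 0" using K_v1_v[OF y] by (simp add: to_monomial_def)
    then show ?thesis using x True v_ne_v1 by (simp add: to_monomial_def)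
  next
    case False
    then show ?thesis using x by (auto simp: to_monomial_def)
  qed
qed (simp add: crit1_def)

lemma crit1_is_complex: "is_complex crit1 (kcoef :: _ \<Rightarrow> _ \<Rightarrow> 'k::field)"
  by (rule subcomplex_is_complex[OF subcomplex_crit1 finite_K K_complex])

lemma bij_src1_tgt1: "bij_betw (to_monomial v1) (src1 (Suc j)) (tgt1 j)"
proof (rule bij_betw_byWitness[where f' = "to_exterior v1"])
  show "\<forall>x\<in>src1 (Suc j). to_exterior v1 (to_monomial v1 x) = x"
    by (auto simp: src1_def to_exterior_to_monomial)
  show "\<forall>y\<in>tgt1 j. to_monomial v1 (to_exterior v1 y) = y"
    by (auto simp: tgt1_def to_monomial_to_exterior)
  show "to_monomial v1 ` src1 (Suc j) \<subseteq> tgt1 j"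
  proof
    fix y assume "y \<in> to_monomial v1 ` src1 (Suc j)"
    then obtain x where x: "x \<in> K (Suc j)" "v1 \<in> fst x" "snd x v = 0" and y: "y = to_monomial v1 x"
      by (auto simp: src1_def)
    have "to_monomial v1 x \<in> K j"
      using x edge_at_v1 v_ne_v1 by (intro to_monomial_in_K) auto
    then show "y \<in> tgt1 j" using y by (simp add: tgt1_def to_monomial_def)
  qed
  show "to_exterior v1 ` tgt1 j \<subseteq> src1 (Suc j)"
  proof
    fix x assume "x \<in> to_exterior v1 ` tgt1 j"
    then obtain y where y: "y \<in> K j" "v1 \<notin> fst y" "snd y v1 \<ge> 1" and x: "x = to_exterior v1 y"
      by (auto simp: tgt1_def)
    then have "to_exterior v1 y \<in> K (Suc j)" using to_exterior_in_K v1_in_V by blast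
    then show "x \<in> src1 (Suc j)"
      using x K_v1_v[OF y(1,3)] v_ne_v1 by (simp add: src1_def to_exterior_def)
  qed
qed

lemma homology_dim_touched:
  "homology_dim touched (kcoef :: _ \<Rightarrow> _ \<Rightarrow> 'k::field) i = homology_dim crit1 (kcoef :: _ \<Rightarrow> _ \<Rightarrow> 'k) i"
proof (rule homology_dim_matched[where Src = src1 and Tgt = tgt1 and g = "to_monomial v1"])
  show "finite (touched j)" for j using finite_K by (simp add: touched_def)
  show "is_complex touched (kcoef :: _ \<Rightarrow> _ \<Rightarrow> 'k)"
    by (rule subcomplex_is_complex[OF subcomplex_touched finite_K K_complex])
  show "touched j = src1 j \<union> tgt1 j \<union> crit1 j" for j
    by (auto simp: touched_def src1_def tgt1_def crit1_def)
  show "src1 j \<inter> tgt1 j = {}" "src1 j \<inter> crit1 j = {}" "tgt1 j \<inter> crit1 j = {}" for j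
    by (auto simp: src1_def tgt1_def crit1_def)
  show "src1 0 = {}" using K_0 by (auto simp: src1_def)
  show "subcomplex crit1 touched (kcoef :: _ \<Rightarrow> _ \<Rightarrow> 'k)"
    by (rule subcomplex_mono[OF subcomplex_crit1]) (auto simp: crit1_def touched_def)
  show "bij_betw (to_monomial v1) (src1 (Suc j)) (tgt1 j)" for j by (rule bij_src1_tgt1)
  show "kcoef x (to_monomial v1 x) \<noteq> (0 :: 'k)" if "x \<in> src1 (Suc j)" for j x
    using that kcoef_to_monomial_nonzero[of v1 x, where 'k = 'k] by (auto simp: src1_def)
  show "kcoef x y = (0 :: 'k)" if "x \<in> src1 (Suc j)" "y \<in> tgt1 j" "y \<noteq> to_monomial v1 x" for j x y
    using that kcoef_nonzero_to_monomial[of x y v1] by (auto simp: src1_def tgt1_def)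
qed

lemma subcomplex_crit2: "subcomplex crit2 crit1 (kcoef :: _ \<Rightarrow> _ \<Rightarrow> 'k::field)"
  by (rule subcomplex_by_predicate[where p = "\<lambda>x. v \<notin> fst x \<and> snd x v = 1"])
    (auto simp: crit2_def to_monomial_def)

lemma bij_src2_tgt2: "bij_betw (to_monomial v) (src2 (Suc j)) (tgt2 j)"
proof (rule bij_betw_byWitness[where f' = "to_exterior v"])
  show "\<forall>x\<in>src2 (Suc j). to_exterior v (to_monomial v x) = x"
    by (auto simp: src2_def to_exterior_to_monomial)
  show "\<forall>y\<in>tgt2 j. to_monomial v (to_exterior v y) = y"
    by (auto simp: tgt2_def to_monomial_to_exterior)
  show "to_monomial v ` src2 (Suc j) \<subseteq> tgt2 j"
  proof
    fix y assume "y \<in> to_monomial v ` src2 (Suc j)"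
    then obtain x where x: "x \<in> K (Suc j)" "v1 \<in> fst x" "snd x v \<ge> 1" "v \<in> fst x"
      and y: "y = to_monomial v x"
      by (auto simp: src2_def crit1_def)
    have "to_monomial v x \<in> K j"
    proof (rule to_monomial_in_K[OF x(1,4)])
      fix e assume "e \<in> E" "v \<in> e"
      then obtain w where "w \<in> insert v1 N" "e = {v, w}" using edge_at_v by blast
      then show "\<exists>u\<in>e. u \<noteq> v \<and> snd x u = 0" using K_v_neighbour[OF x(1,3)] neighbour_v by blast
    qed
    then show "y \<in> tgt2 j" using y x v_ne_v1 by (simp add: tgt2_def crit1_def to_monomial_def)
  qed
  show "to_exterior v ` tgt2 j \<subseteq> src2 (Suc j)"
  proof
    fix x assume "x \<in> to_exterior v ` tgt2 j"
    then obtain y where y: "y \<in> K j" "v1 \<in> fst y" "v \<notin> fst y" "snd y v \<ge> 2"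
      and x: "x = to_exterior v y"
      by (auto simp: tgt2_def crit1_def)
    then have "to_exterior v y \<in> K (Suc j)" using to_exterior_in_K v_in_V by simp
    then show "x \<in> src2 (Suc j)" using x y by (simp add: src2_def crit1_def to_exterior_def)
  qed
qed

lemma homology_dim_crit1:
  "homology_dim crit1 (kcoef :: _ \<Rightarrow> _ \<Rightarrow> 'k::field) i = homology_dim crit2 (kcoef :: _ \<Rightarrow> _ \<Rightarrow> 'k) i"
proof (rule homology_dim_matched[where Src = src2 and Tgt = tgt2 and g = "to_monomial v"])
  show "finite (crit1 j)" for j using finite_K by (simp add: crit1_def)
  show "is_complex crit1 (kcoef :: _ \<Rightarrow> _ \<Rightarrow> 'k)" by (rule crit1_is_complex)
  show "crit1 j = src2 j \<union> tgt2 j \<union> crit2 j" for j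
    by (auto simp: src2_def tgt2_def crit2_def crit1_def)
  show "src2 j \<inter> tgt2 j = {}" "src2 j \<inter> crit2 j = {}" "tgt2 j \<inter> crit2 j = {}" for j
    by (auto simp: src2_def tgt2_def crit2_def)
  show "src2 0 = {}" using K_0 by (auto simp: src2_def crit1_def)
  show "subcomplex crit2 crit1 (kcoef :: _ \<Rightarrow> _ \<Rightarrow> 'k)" by (rule subcomplex_crit2)
  show "bij_betw (to_monomial v) (src2 (Suc j)) (tgt2 j)" for j by (rule bij_src2_tgt2)
  show "kcoef x (to_monomial v x) \<noteq> (0 :: 'k)" if "x \<in> src2 (Suc j)" for j x
    using that kcoef_to_monomial_nonzero[of v x, where 'k = 'k] by (auto simp: src2_def)
  show "kcoef x y = (0 :: 'k)" if "x \<in> src2 (Suc j)" "y \<in> tgt2 j" "y \<noteq> to_monomial v x" for j x y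
    using that kcoef_nonzero_to_monomial[of x y v] by (auto simp: src2_def tgt2_def)
qed

lemma homology_dim_crit2:
  "homology_dim crit2 (kcoef :: _ \<Rightarrow> _ \<Rightarrow> 'k::field) i =
     (\<Sum>J\<in>Pow N. homology_dim (block J) (kcoef :: _ \<Rightarrow> _ \<Rightarrow> 'k) i)"
proof (rule homology_dim_UN)
  show "finite (crit2 j)" for j using finite_K by (simp add: crit2_def crit1_def)
  show "is_complex crit2 (kcoef :: _ \<Rightarrow> _ \<Rightarrow> 'k)"
    by (rule subcomplex_is_complex[OF subcomplex_crit2 _ crit1_is_complex])
      (simp add: crit1_def finite_K)
  show "finite (Pow N)" using finite_subset[OF N_subset_V finite_V] by simp
  show "crit2 j = (\<Union>J\<in>Pow N. block J j)" for j
  proof (intro equalityI subsetI)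
    fix x assume "x \<in> crit2 j"
    then have "x \<in> block (fst x \<inter> N) j" "fst x \<inter> N \<in> Pow N" by (simp_all add: block_def)
    then show "x \<in> (\<Union>J\<in>Pow N. block J j)" by blast
  qed (auto simp: block_def)
  show "block J j \<inter> block J' j = {}" if "J \<noteq> J'" for J J' j using that by (auto simp: block_def)
  show "subcomplex (block J) crit2 (kcoef :: _ \<Rightarrow> _ \<Rightarrow> 'k)" for J
  proof (rule subcomplex_by_predicate[where p = "\<lambda>x. fst x \<inter> N = J"])
    fix j x s
    assume x: "x \<in> crit2 (Suc j)" "fst x \<inter> N = J" and y: "to_monomial s x \<in> crit2 j"
    have "s \<notin> N"
    proof
      assume "s \<in> N"
      then have "snd (to_monomial s x) s = 0"
        using y K_v_neighbour[of "to_monomial s x" j s] by (auto simp: crit2_def crit1_def)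
      then show False by (simp add: to_monomial_def)
    qed
    then show "fst (to_monomial s x) \<inter> N = J" using x(2) by (auto simp: to_monomial_def)
  qed (simp add: block_def)
qed

definition "block_map J x = (fst x - insert v1 J, (snd x)(v := 0))"
definition "block_unmap J y = (fst y \<union> insert v1 J, (snd y)(v := 1))"
definition "block_sign J x = (- 1) ^ crossings (insert v1 J) (fst x)"

lemma blockD:
  "x \<in> block J j \<Longrightarrow> x \<in> K j \<and> v1 \<in> fst x \<and> v \<notin> fst x \<and> snd x v = 1 \<and> fst x \<inter> N = J"
  by (auto simp: block_def crit2_def crit1_def)

lemma block_map_in:
  assumes J: "J \<subseteq> N" and x: "x \<in> block J j"
  shows "card J + 1 \<le> j" "j + 1 \<le> d"
    "block_map J x \<in> kbasis V'' E'' (j - (card J + 1)) (d - (card J + 2))"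
proof -
  obtain S m where Sm: "x = (S, m)" by (cases x)
  have x': "(S, m) \<in> K j" "v1 \<in> S" "v \<notin> S" "m v = 1" "S \<inter> N = J"
    using blockD[OF x] Sm by auto
  have k: "S \<subseteq> V" "card S = j" "j \<le> d" "\<forall>u. u \<notin> V \<longrightarrow> m u = 0" "sum m V = d - j" "std_mono E m"
    using x'(1) by (auto simp: K_def mem_kbasis_iff)
  have fin: "finite S" using finite_subset[OF k(1) finite_V] .
  have F: "insert v1 J \<subseteq> S" using x' by auto
  show cJ: "card J + 1 \<le> j" using card_mono[OF fin F] card_insert_v1[OF J] k(2) by simp
  have "m v \<le> sum m V" using member_le_sum[OF v_in_V, of m] finite_V by simp
  then show jd: "j + 1 \<le> d" using x'(4) k(3,5) by simp
  have zero: "\<forall>u. u \<notin> V'' \<longrightarrow> (m(v := 0)) u = 0"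
    using k(4) K_v_neighbour[OF x'(1)] x'(4) by (auto simp: in_V''_iff)
  have "card (S - insert v1 J) = j - (card J + 1)"
    using card_Diff_subset[OF finite_subset[OF F fin] F] k(2) card_insert_v1[OF J] by simp
  moreover have "sum (m(v := 0)) V = (d - (card J + 2)) - (j - (card J + 1))"
    using sum_fun_upd_add[OF finite_V v_in_V, of m 0] x'(4) k(5) cJ jd by simp
  moreover have "std_mono E (m(v := 0))" by (rule std_mono_le[OF k(6)]) simp
  moreover have "S - insert v1 J \<subseteq> V''" using k(1) x'(3,5) by (auto simp: in_V''_iff)
  ultimately show "block_map J x \<in> kbasis V'' E'' (j - (card J + 1)) (d - (card J + 2))"
    using k zero cJ jd Sm by (auto simp: kbasis_V''_iff mem_kbasis_iff block_map_def)
qed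

lemma std_mono_block_unmap:
  assumes "std_mono E m" "\<forall>u. u \<notin> V'' \<longrightarrow> m u = 0"
  shows "std_mono E (m(v := 1))"
  unfolding std_mono_def
proof
  fix e assume e: "e \<in> E"
  then obtain u where u: "u \<in> e" "m u = 0" using assms(1) by (auto simp: std_mono_def)
  show "\<exists>u\<in>e. (m(v := 1)) u = 0"
  proof (cases "u = v")
    case True
    then obtain w where w: "w \<in> insert v1 N" "e = {v, w}" using edge_at_v e u(1) by blast
    then have "w \<noteq> v" "m w = 0" using neighbour_v assms(2) by (auto simp: in_V''_iff)
    then show ?thesis using w(2) by auto
  next
    case False
    then show ?thesis using u by auto
  qed
qed

lemma block_unmap_in:
  assumes J: "J \<subseteq> N" and j: "card J + 1 \<le> j" and dJ: "card J + 2 \<le> d"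
    and y: "y \<in> kbasis V'' E'' (j - (card J + 1)) (d - (card J + 2))"
  shows "block_unmap J y \<in> block J j"
proof -
  obtain S m where Sm: "y = (S, m)" by (cases y)
  have k: "S \<subseteq> V''" "\<forall>u. u \<notin> V'' \<longrightarrow> m u = 0" "card S = j - (card J + 1)"
    "j - (card J + 1) \<le> d - (card J + 2)" "sum m V = (d - (card J + 2)) - (j - (card J + 1))"
    "std_mono E m"
    using y Sm by (auto simp: kbasis_V''_iff mem_kbasis_iff)
  have S: "\<forall>u\<in>S. u \<in> V \<and> u \<noteq> v \<and> u \<notin> insert v1 N" using k(1) in_V''_iff by blast
  have F: "insert v1 J \<subseteq> V" "S \<inter> insert v1 J = {}"
    using J S N_subset_V v1_in_V by auto
  have "finite S" using finite_subset[OF k(1) finite_subset[OF V''_subset_V finite_V]] .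
  then have "card (S \<union> insert v1 J) = j"
    using card_Un_disjoint[OF _ finite_subset[OF F(1) finite_V] F(2)] k(3) card_insert_v1[OF J] j
    by simp
  moreover have "sum (m(v := 1)) V = d - j"
    using sum_fun_upd_add[OF finite_V v_in_V, of m 1] k(2,4,5) j dJ by (simp add: in_V''_iff)
  moreover have "std_mono E (m(v := 1))" by (rule std_mono_block_unmap[OF k(6,2)])
  ultimately have "block_unmap J y \<in> K j"
    using k(1,2,4) F(1) V''_subset_V v_in_V j dJ Sm
    by (auto simp: K_def mem_kbasis_iff block_unmap_def)
  moreover have "v \<notin> S" "S \<inter> N = {}" using S by auto
  ultimately show ?thesis
    using Sm J v_ne_v1 v1_notin_N neighbour_v
    by (auto simp: block_def crit2_def crit1_def block_unmap_def)
qed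

lemma bij_block_map:
  assumes J: "J \<subseteq> N" and dJ: "card J + 2 \<le> d"
  shows "bij_betw (block_map J) (block J j)
    (shift_grading (card J + 1) (\<lambda>j. kbasis V'' E'' j (d - (card J + 2))) j)"
proof (rule bij_betw_byWitness[where f' = "block_unmap J"])
  show "\<forall>x\<in>block J j. block_unmap J (block_map J x) = x"
  proof
    fix x assume "x \<in> block J j"
    then have "v1 \<in> fst x" "fst x \<inter> N = J" "snd x v = 1" using blockD by auto
    then have "insert v1 J \<subseteq> fst x" "snd x v = 1" by auto
    then show "block_unmap J (block_map J x) = x"
      by (cases x) (auto simp: block_map_def block_unmap_def fun_eq_iff)
  qed
  show "\<forall>y\<in>shift_grading (card J + 1) (\<lambda>j. kbasis V'' E'' j (d - (card J + 2))) j.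
      block_map J (block_unmap J y) = y"
  proof
    fix y assume "y \<in> shift_grading (card J + 1) (\<lambda>j. kbasis V'' E'' j (d - (card J + 2))) j"
    then have "fst y \<subseteq> V''" "\<forall>u. u \<notin> V'' \<longrightarrow> snd y u = 0"
      by (auto simp: shift_grading_def kbasis_V''_iff split: if_splits)
    moreover have "insert v1 J \<inter> V'' = {}" "v \<notin> V''" using J by (auto simp: in_V''_iff)
    ultimately show "block_map J (block_unmap J y) = y"
      by (cases y) (auto simp: block_map_def block_unmap_def fun_eq_iff)
  qed
  show "block_map J ` block J j \<subseteq> shift_grading (card J + 1) (\<lambda>j. kbasis V'' E'' j (d - (card J + 2))) j"
    using block_map_in[OF J] by (auto simp: shift_grading_def)
  show "block_unmap J ` shift_grading (card J + 1) (\<lambda>j. kbasis V'' E'' j (d - (card J + 2))) j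
      \<subseteq> block J j"
    using block_unmap_in[OF J _ dJ] by (auto simp: shift_grading_def split: if_splits)
qed

lemma kcoef_block_map:
  assumes x: "x \<in> block J (Suc j)" and y: "y \<in> block J j"
  shows "kcoef (block_map J x) (block_map J y) = block_sign J x * block_sign J y * (kcoef x y :: 'k::field)"
proof -
  obtain S m T m' where xy: "x = (S, m)" "y = (T, m')" by (cases x, cases y)
  have x': "v1 \<in> S" "v \<notin> S" "m v = 1" "S \<inter> N = J" "S \<subseteq> V"
    using blockD[OF x] xy by (auto simp: K_def mem_kbasis_iff)
  have y': "v1 \<in> T" "m' v = 1" "T \<inter> N = J" using blockD[OF y] xy by auto
  have "kcoef (block_map J x) (block_map J y) = kcoef (S - insert v1 J, m) (T - insert v1 J, m')"
    using x' y' xy kcoef_fun_upd_outside[of v "S - insert v1 J" m m' 0] by (simp add: block_map_def)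
  also have "\<dots> = (- 1) ^ (crossings (insert v1 J) S + crossings (insert v1 J) T) * kcoef (S, m) (T, m')"
    using x' y' finite_subset[OF x'(5) finite_V] by (intro kcoef_Diff) auto
  finally show ?thesis using xy by (simp add: block_sign_def power_add)
qed

lemma homology_dim_block:
  assumes J: "J \<subseteq> N"
  shows "homology_dim (block J) (kcoef :: _ \<Rightarrow> _ \<Rightarrow> 'k::field) i =
    (if card J + 2 \<le> d \<and> card J + 1 \<le> i
     then betti_nat TYPE('k) V'' E'' (i - (card J + 1)) (d - (card J + 2)) else 0)"
proof (cases "card J + 2 \<le> d")
  case True
  let ?L = "shift_grading (card J + 1) (\<lambda>j. kbasis V'' E'' j (d - (card J + 2)))"
  have "homology_dim (block J) (kcoef :: _ \<Rightarrow> _ \<Rightarrow> 'k) i = homology_dim ?L (kcoef :: _ \<Rightarrow> _ \<Rightarrow> 'k) i"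
  proof (rule homology_dim_signed_bij[where \<phi> = "block_map J" and \<epsilon> = "block_sign J"])
    show "finite (block J j)" for j using finite_K by (simp add: block_def crit2_def crit1_def)
    show "bij_betw (block_map J) (block J j) (?L j)" for j by (rule bij_block_map[OF J True])
    show "block_sign J x * block_sign J x = (1 :: 'k)" for x
      by (simp add: block_sign_def flip: power_mult_distrib)
    show "kcoef (block_map J x) (block_map J y) = block_sign J x * block_sign J y * (kcoef x y :: 'k)"
      if "x \<in> block J (Suc j)" "y \<in> block J j" for j x y
      by (rule kcoef_block_map[OF that])
  qed
  moreover have "homology_dim ?L (kcoef :: _ \<Rightarrow> _ \<Rightarrow> 'k) i =
      betti_nat TYPE('k) V'' E'' (i - (card J + 1)) (d - (card J + 2))" if "card J + 1 \<le> i"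
    using homology_dim_shift[of "card J + 1" _ kcoef "i - (card J + 1)"] that
    by (simp add: betti_nat_eq_homology_dim)
  moreover have "homology_dim ?L (kcoef :: _ \<Rightarrow> _ \<Rightarrow> 'k) i = 0" if "\<not> card J + 1 \<le> i"
    using that by (intro homology_dim_shift_below) simp
  ultimately show ?thesis using True by auto
next
  case False
  then have "block J j = {}" for j using block_map_in[OF J] by fastforce
  then show ?thesis using False by (simp add: homology_dim_empty)
qed

lemma betti_nat_leaf:
  "betti_nat TYPE('k::field) V E i d = betti_nat TYPE('k) (V - {v1}) (induced E (V - {v1})) i d +
     (\<Sum>k = 0..card N. (card N choose k) *
        (if k + 2 \<le> d \<and> k + 1 \<le> i then betti_nat TYPE('k) V'' E'' (i - (k + 1)) (d - (k + 2)) else 0))"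
proof -
  define g where "g k = (if k + 2 \<le> d \<and> k + 1 \<le> i
    then betti_nat TYPE('k) V'' E'' (i - (k + 1)) (d - (k + 2)) else 0)" for k
  have "betti_nat TYPE('k) V E i d = homology_dim K (kcoef :: _ \<Rightarrow> _ \<Rightarrow> 'k) i"
    by (simp add: betti_nat_eq_homology_dim K_def[abs_def])
  also have "\<dots> = betti_nat TYPE('k) (V - {v1}) (induced E (V - {v1})) i d +
      (\<Sum>J\<in>Pow N. homology_dim (block J) (kcoef :: _ \<Rightarrow> _ \<Rightarrow> 'k) i)"
    by (simp add: homology_dim_K_eq homology_dim_touched homology_dim_crit1 homology_dim_crit2
        betti_nat_eq_homology_dim untouched_eq_kbasis[abs_def])
  also have "(\<Sum>J\<in>Pow N. homology_dim (block J) (kcoef :: _ \<Rightarrow> _ \<Rightarrow> 'k) i) = (\<Sum>J\<in>Pow N. g (card J))"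
    by (intro sum.cong refl) (simp add: homology_dim_block g_def)
  also have "\<dots> = (\<Sum>k = 0..card N. (card N choose k) * g k)"
    using sum_Pow_card[OF finite_subset[OF N_subset_V finite_V], of g] by simp
  finally show ?thesis by (simp add: g_def)
qed

end

lemma betti_diff_eq_betti_nat:
  assumes "0 \<le> i" "0 \<le> d"
  shows "betti K V E (i - int a) (d - int b) =
    (if b \<le> nat d \<and> a \<le> nat i then betti_nat K V E (nat i - a) (nat d - b) else 0)"
  using assms by (auto simp: betti_def nat_diff_distrib)

lemma (in leaf_edge) betti_leaf:
  "betti TYPE('k::field) V E i d = betti TYPE('k) (V - {v1}) (induced E (V - {v1})) i d +
     (\<Sum>k = 0..card N. (card N choose k) * betti TYPE('k) V'' E'' (i - int (k + 1)) (d - int (k + 2)))"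
proof (cases "i < 0 \<or> d < 0")
  case True
  then show ?thesis by (auto simp: betti_def intro!: sum.neutral)
next
  case False
  interpret leaf_edge_degree V E v v1 N "nat d" by unfold_locales
  have b0: "betti K W F i d = betti_nat K W F (nat i) (nat d)" for K :: "'k itself" and W F
    using False by (simp add: betti_def)
  have b1: "betti K W F (i - int (k + 1)) (d - int (k + 2)) =
      (if k + 2 \<le> nat d \<and> k + 1 \<le> nat i then betti_nat K W F (nat i - (k + 1)) (nat d - (k + 2)) else 0)"
    for K :: "'k itself" and W F k
    using False by (intro betti_diff_eq_betti_nat) auto
  show ?thesis
    unfolding b0 b1 by (rule betti_nat_leaf)
qed

theorem theorem9p15:
  fixes V :: "'v::linorder set" and E :: "'v set set" and v :: 'v
    and vs :: "nat \<Rightarrow> 'v" and n :: nat and i d :: int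
  assumes "forest V E"
    and "v \<in> V"
    and "n \<ge> 1"
    and "inj_on vs {1..n}"
    and "neighbours E v = vs ` {1..n}"
    and "\<forall>j\<in>{1..<n}. degree E (vs j) = 1"
    and "n = 1 \<longrightarrow> degree E (vs 1) = 1"
  shows "betti TYPE('k::field) V E i d =
           betti TYPE('k) (V - {vs 1}) (induced E (V - {vs 1})) i d
           + (\<Sum>j = 0..n - 1. (n - 1 choose j) *
                betti TYPE('k) (V - ({v} \<union> vs ` {1..n})) (induced E (V - ({v} \<union> vs ` {1..n})))
                  (i - int (j + 1)) (d - int (j + 2)))"
proof -
  have split: "{1..n} = insert 1 {2..n}" using assms(3) by auto
  have "neighbours E (vs 1) = {v}"
  proof (rule degree_one_neighbours)
    show "degree E (vs 1) = 1" using assms(3,6,7) by (cases "n = 1") auto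
    show "v \<in> neighbours E (vs 1)" using assms(5) split by (auto simp: neighbours_def insert_commute)
  qed
  moreover have "vs 1 \<notin> vs ` {2..n}" using assms(4) split by (auto simp: inj_on_def)
  ultimately interpret leaf_edge V E v "vs 1" "vs ` {2..n}"
    using assms(1,2,5) split by unfold_locales (auto simp: forest_def)
  have "card (vs ` {2..n}) = n - 1"
    using card_image[OF inj_on_subset[OF assms(4)]] by auto
  moreover have "V'' = V - ({v} \<union> vs ` {1..n})"
    unfolding V''_def using split by auto
  ultimately show ?thesis using betti_leaf[where 'k = 'k] unfolding E''_def by simp
qed

end
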